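(* Let $f,h_1,\dots,h_p\colon\mathbb R^n\times\mathbb R^m\to\mathbb R$ be continuously differentiable, $I=\{1,\dots,\ell\}$, $J=\{\ell+1,\dots,p\}$, $\Gamma(x):=\{y\mid h_i(x,y)\le0\ (i\in I),\ h_i(x,y)=0\ (i\in J)\}$, $\varphi(x):=\inf\{f(x,y)\mid y\in\Gamma(x)\}$, $S(x):=\operatorname{argmin}\{f(x,y)\mid y\in\Gamma(x)\}$, $h_0(x,y):=f(x,y)-\varphi(x)$. Fix $\bar x\in\operatorname{dom}\Gamma$. Assume (A1'): for each $x$, $f(x,\cdot)$ and $h_i(x,\cdot)$, $i\in I$, are convex and $h_i(x,\cdot)$, $i\in J$, are affine; (A2): $\Gamma$ is locally bounded at $\bar x$; and RCPLD$_S$ with respect to $\operatorname{dom}\Gamma$ holds at each point of $\{\bar x\}\times S(\bar x)$. Then $S$ is lower semicontinuous at $\bar x$ with respect to $\operatorname{dom}S$.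
   Context: $\operatorname{dom}\Gamma:=\{x\mid\Gamma(x)\neq\emptyset\}$, similarly $\operatorname{dom}S$; $\inf\emptyset=+\infty$. $\Gamma$ is locally bounded at $\bar x$ if there are a bounded $B$ and a neighborhood $V$ of $\bar x$ with $\Gamma(x)\subset B$ for $x\in V$. $S$ is lower semicontinuous at $\bar x$ with respect to $\Omega$ if for each open $O$ with $S(\bar x)\cap O\neq\emptyset$ there is a neighborhood $V$ of $\bar x$ with $S(x)\cap O\neq\emptyset$ for all $x\in V\cap\Omega$. A pair of finite families $((a^i)_{i\in I_1},(b^i)_{i\in I_2})$ is positive-linearly dependent if there are $\alpha_i\ge0$, $\beta_i$, not all zero, with $\sum\alpha_ia^i+\sum\beta_ib^i=0$. For $(\bar x,\bar y)\in\operatorname{gph}S$ let $I(\bar x,\bar y):=\{i\in I\mid h_i(\bar x,\bar y)=0\}$ and $\nabla_yh_0:=\nabla_yf$. RCPLD$_S$ holds at $(\bar x,\bar y)$ with respect to $\Omega$ if there are a neighborhood $U$ of $(\bar x,\bar y)$ and $\mathcal S\subset J$ such that: (i) $\{\nabla_yh_i(\bar x,\bar y)\mid i\in\mathcal S\}$ is a basis of the span of $\{\nabla_yh_i(\bar x,\bar y)\mid i\in J\}$; (ii) $(\nabla_yh_i(x,y))_{i\in J}$ has constant rank on $U\cap(\Omega\times\mathbb R^m)$; (iii) for each $K\subset\{0\}\cup I(\bar x,\bar y)$ with $((\nabla_yh_i(\bar x,\bar y))_{i\in K},(\nabla_yh_i(\bar x,\bar y))_{i\in\mathcal S})$ positive-linearly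 dependent, $(\nabla_yh_i(x,y))_{i\in K\cup\mathcal S}$ is linearly dependent for each $(x,y)\in U\cap(\Omega\times\mathbb R^m)$. *)

theory Defs
  imports "HOL-Analysis.Analysis"
begin

definition C1_fun :: "('c::euclidean_space \<Rightarrow> real) \<Rightarrow> bool" where
  "C1_fun g \<longleftrightarrow> (\<exists>G. continuous_on UNIV G \<and> (\<forall>z. (g has_derivative (\<lambda>v. G z \<bullet> v)) (at z)))"

definition grad_y :: "('a \<Rightarrow> 'b::euclidean_space \<Rightarrow> real) \<Rightarrow> 'a \<Rightarrow> 'b \<Rightarrow> 'b" where
  "grad_y g x y = (THE v. (g x has_derivative (\<lambda>w. v \<bullet> w)) (at y))"

text \<open>Gradient of h_i w.r.t. y, with the convention that index 0 stands for h_0 = f - phi,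
  whose y-gradient is the y-gradient of f.\<close>
definition G_y :: "('a \<Rightarrow> 'b::euclidean_space \<Rightarrow> real) \<Rightarrow> (nat \<Rightarrow> 'a \<Rightarrow> 'b \<Rightarrow> real) \<Rightarrow> nat \<Rightarrow> 'a \<Rightarrow> 'b \<Rightarrow> 'b" where
  "G_y f h i x y = (if i = 0 then grad_y f x y else grad_y (h i) x y)"

definition Gamma :: "(nat \<Rightarrow> 'a \<Rightarrow> 'b \<Rightarrow> real) \<Rightarrow> nat \<Rightarrow> nat \<Rightarrow> 'a \<Rightarrow> 'b set" where
  "Gamma h l p x = {y. (\<forall>i\<in>{1..l}. h i x y \<le> 0) \<and> (\<forall>i\<in>{l+1..p}. h i x y = 0)}"

text \<open>Optimal value function (inf over the empty set is +infinity).\<close>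
definition phi :: "('a \<Rightarrow> 'b \<Rightarrow> real) \<Rightarrow> (nat \<Rightarrow> 'a \<Rightarrow> 'b \<Rightarrow> real) \<Rightarrow> nat \<Rightarrow> nat \<Rightarrow> 'a \<Rightarrow> ereal" where
  "phi f h l p x = (INF y\<in>Gamma h l p x. ereal (f x y))"

definition Sol :: "('a \<Rightarrow> 'b \<Rightarrow> real) \<Rightarrow> (nat \<Rightarrow> 'a \<Rightarrow> 'b \<Rightarrow> real) \<Rightarrow> nat \<Rightarrow> nat \<Rightarrow> 'a \<Rightarrow> 'b set" where
  "Sol f h l p x = {y \<in> Gamma h l p x. ereal (f x y) = phi f h l p x}"

definition dom_map :: "('a \<Rightarrow> 'b set) \<Rightarrow> 'a set" where
  "dom_map M = {x. M x \<noteq> {}}"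

definition locally_bounded_at :: "('a::topological_space \<Rightarrow> 'b::metric_space set) \<Rightarrow> 'a \<Rightarrow> bool" where
  "locally_bounded_at M xb \<longleftrightarrow> (\<exists>B V. bounded B \<and> open V \<and> xb \<in> V \<and> (\<forall>x\<in>V. M x \<subseteq> B))"

definition lsc_wrt :: "('a::topological_space \<Rightarrow> 'b::topological_space set) \<Rightarrow> 'a \<Rightarrow> 'a set \<Rightarrow> bool" where
  "lsc_wrt M xb \<Omega> \<longleftrightarrow> (\<forall>W. open W \<and> M xb \<inter> W \<noteq> {} \<longrightarrow>
      (\<exists>V. open V \<and> xb \<in> V \<and> (\<forall>x\<in>V \<inter> \<Omega>. M x \<inter> W \<noteq> {})))"

definition pos_lin_dep :: "('i \<Rightarrow> 'v::real_vector) \<Rightarrow> 'i set \<Rightarrow> ('j \<Rightarrow> 'v) \<Rightarrow> 'j set \<Rightarrow> bool" where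
  "pos_lin_dep a K1 b K2 \<longleftrightarrow> (\<exists>\<alpha> \<beta>. (\<forall>i\<in>K1. \<alpha> i \<ge> 0) \<and> ((\<exists>i\<in>K1. \<alpha> i \<noteq> 0) \<or> (\<exists>i\<in>K2. \<beta> i \<noteq> 0)) \<and>
      (\<Sum>i\<in>K1. \<alpha> i *\<^sub>R a i) + (\<Sum>i\<in>K2. \<beta> i *\<^sub>R b i) = 0)"

definition fam_lin_dep :: "('i \<Rightarrow> 'v::real_vector) \<Rightarrow> 'i set \<Rightarrow> bool" where
  "fam_lin_dep v K \<longleftrightarrow> (\<exists>c. (\<exists>i\<in>K. c i \<noteq> 0) \<and> (\<Sum>i\<in>K. c i *\<^sub>R v i) = 0)"

definition RCPLD_S :: "('a::euclidean_space \<Rightarrow> 'b::euclidean_space \<Rightarrow> real) \<Rightarrow> (nat \<Rightarrow> 'a \<Rightarrow> 'b \<Rightarrow> real)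
    \<Rightarrow> nat \<Rightarrow> nat \<Rightarrow> 'a set \<Rightarrow> 'a \<Rightarrow> 'b \<Rightarrow> bool" where
  "RCPLD_S f h l p \<Omega> xb yb \<longleftrightarrow>
    (\<exists>U \<S>. open U \<and> (xb, yb) \<in> U \<and> \<S> \<subseteq> {l+1..p} \<and>
      \<not> fam_lin_dep (\<lambda>i. G_y f h i xb yb) \<S> \<and>
      span ((\<lambda>i. G_y f h i xb yb) ` \<S>) = span ((\<lambda>i. G_y f h i xb yb) ` {l+1..p}) \<and>
      (\<exists>r. \<forall>(x, y) \<in> U \<inter> (\<Omega> \<times> UNIV). dim ((\<lambda>i. G_y f h i x y) ` {l+1..p}) = r) \<and>
      (\<forall>K. K \<subseteq> {0} \<union> {i\<in>{1..l}. h i xb yb = 0} \<longrightarrow>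
          pos_lin_dep (\<lambda>i. G_y f h i xb yb) K (\<lambda>i. G_y f h i xb yb) \<S> \<longrightarrow>
          (\<forall>(x, y) \<in> U \<inter> (\<Omega> \<times> UNIV). fam_lin_dep (\<lambda>i. G_y f h i x y) (K \<union> \<S>))))"

end

theory Submission
  imports Defs
begin

(* Suppose S is not lower semicontinuous at xb: there are yb in S(xb), delta > 0 and points
   xn -> xb of dom S whose solution sets avoid the ball B(yb, delta), and by local boundedness
   solutions wn in S(xn) converge to some wb.

   Let qn be the nearest point to yb on the affine set of equality constraints at xn. By RCPLD
   (constant rank) the equality gradients are uniformly linearly independent near xb, so a
   Hoffman-type bound gives qn -> yb. The infeasibility Rn of the level set
   {y | h_i(xn,y) <= 0 (i in I), f(xn,y) <= f(xn,wn)} vanishes exactly on S(xn) and tends to 0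
   at qn. An Ekeland-type perturbation produces zn -> yb, still outside S(xn), at which Rn is
   approximately stationary along the equality constraints. The normalised multipliers of this
   stationarity converge to a positive linear dependence at (xb,yb) between the gradients of
   h_0 and of active inequality constraints on one side and of the equality constraints on the
   other. For a minimal such dependence, RCPLD_S(iii) makes the same gradients dependent at
   (xn,zn), with strictly positive coefficients by minimality. This contradicts convexity: all
   constraints in the combination are violated at zn but satisfied at wn. *)

section \<open>Finite families of vectors\<close>

definition lin_indep_bound :: "real \<Rightarrow> ('i \<Rightarrow> 'v::real_normed_vector) \<Rightarrow> 'i set \<Rightarrow> bool" where
  "lin_indep_bound c v T \<longleftrightarrow> (\<forall>\<mu>. c * (\<Sum>t\<in>T. \<bar>\<mu> t\<bar>) \<le> norm (\<Sum>t\<in>T. \<mu> t *\<^sub>R v t))"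

lemma fam_lin_depI: "i \<in> T \<Longrightarrow> c i \<noteq> 0 \<Longrightarrow> (\<Sum>i\<in>T. c i *\<^sub>R v i) = 0 \<Longrightarrow> fam_lin_dep v T"
  unfolding fam_lin_dep_def by blast

lemma inj_on_if_not_fam_lin_dep:
  assumes "finite T" "\<not> fam_lin_dep v T"
  shows "inj_on v T"
proof (rule inj_onI, rule ccontr)
  fix i j assume ij: "i \<in> T" "j \<in> T" "v i = v j" "i \<noteq> j"
  let ?c = "\<lambda>k. if k = i then 1 else if k = j then -1 else (0::real)"
  have "(\<Sum>k\<in>T. ?c k *\<^sub>R v k) = (\<Sum>k\<in>T. (if k = i then v i else 0) - (if k = j then v j else 0))"
    by (rule sum.cong) (use ij in auto)
  also have "\<dots> = 0"
    using ij assms(1) by (simp add: sum_subtractf sum.delta)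
  finally show False
    using fam_lin_depI[of i T ?c v] ij assms(2) by simp
qed

lemma independent_if_not_fam_lin_dep:
  assumes "finite T" "\<not> fam_lin_dep v T"
  shows "independent (v ` T)"
proof
  assume "dependent (v ` T)"
  then obtain u w where "w \<in> v ` T" "u w \<noteq> 0" "(\<Sum>w\<in>v ` T. u w *\<^sub>R w) = 0"
    using assms(1) by (auto simp: dependent_finite)
  moreover have "(\<Sum>w\<in>v ` T. u w *\<^sub>R w) = (\<Sum>k\<in>T. u (v k) *\<^sub>R v k)"
    using sum.reindex[OF inj_on_if_not_fam_lin_dep[OF assms]] by simp
  ultimately show False
    using fam_lin_depI[of _ T "u \<circ> v" v] assms(2) by auto
qed

lemma dim_image_if_not_fam_lin_dep:
  "finite T \<Longrightarrow> \<not> fam_lin_dep v T \<Longrightarrow> dim (v ` T) = card T"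
  using dim_eq_card_independent[OF independent_if_not_fam_lin_dep] card_image[OF inj_on_if_not_fam_lin_dep]
  by metis

lemma span_image_sum_repr:
  assumes "finite T" "inj_on v T" "x \<in> span (v ` T)"
  obtains \<mu> where "x = (\<Sum>t\<in>T. \<mu> t *\<^sub>R v t)"
proof -
  obtain u where "x = (\<Sum>w\<in>v ` T. u w *\<^sub>R w)"
    using assms(1,3) span_finite[of "v ` T"] by auto
  then have "x = (\<Sum>t\<in>T. u (v t) *\<^sub>R v t)"
    using sum.reindex[OF assms(2), of "\<lambda>w. u w *\<^sub>R w"] by simp
  then show thesis by (rule that)
qed

lemma not_fam_lin_dep_if_lin_indep_bound:
  assumes "c > 0" "lin_indep_bound c v T" "finite T"
  shows "\<not> fam_lin_dep v T"
proof
  assume "fam_lin_dep v T"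
  then obtain \<mu> i where i: "i \<in> T" "\<mu> i \<noteq> 0" and "(\<Sum>t\<in>T. \<mu> t *\<^sub>R v t) = 0"
    unfolding fam_lin_dep_def by blast
  then have "c * (\<Sum>t\<in>T. \<bar>\<mu> t\<bar>) \<le> 0"
    using assms(2) unfolding lin_indep_bound_def by (metis norm_zero)
  moreover have "\<bar>\<mu> i\<bar> \<le> (\<Sum>t\<in>T. \<bar>\<mu> t\<bar>)"
    using i assms(3) by (intro member_le_sum) auto
  ultimately show False
    using i(2) assms(1) by (simp add: mult_le_0_iff)
qed

lemma finite_family_convergent_subseq:
  fixes c :: "nat \<Rightarrow> 'i \<Rightarrow> real"
  assumes "finite T" "\<forall>\<^sub>F n in sequentially. \<forall>i\<in>T. \<bar>c n i\<bar> \<le> B"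
  obtains r L where "strict_mono r" "\<forall>i\<in>T. (\<lambda>n. c (r n) i) \<longlonglongrightarrow> L i"
proof -
  obtain N where N: "\<And>n i. n \<ge> N \<Longrightarrow> i \<in> T \<Longrightarrow> \<bar>c n i\<bar> \<le> B"
    using assms(2) by (auto simp: eventually_sequentially)
  have "\<exists>r L. strict_mono r \<and> (\<forall>i\<in>S. (\<lambda>n. c (r n + N) i) \<longlonglongrightarrow> L i)" if "S \<subseteq> T" for S
    using finite_subset[OF that assms(1)] that
  proof (induction S rule: finite_induct)
    case empty
    show ?case by (auto intro: strict_mono_id)
  next
    case (insert j S)
    then obtain r L where r: "strict_mono r" and L: "\<forall>i\<in>S. (\<lambda>n. c (r n + N) i) \<longlonglongrightarrow> L i"
      by auto
    have "bounded (range (\<lambda>n. c (r n + N) j))"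
      unfolding bounded_real using N insert.prems by (intro exI[of _ B]) auto
    then obtain a s where s: "strict_mono s" and a: "((\<lambda>n. c (r n + N) j) \<circ> s) \<longlonglongrightarrow> a"
      using bounded_imp_convergent_subsequence by blast
    have "(\<lambda>n. c (r (s n) + N) i) \<longlonglongrightarrow> (L(j := a)) i" if "i \<in> insert j S" for i
      using that a LIMSEQ_subseq_LIMSEQ[OF _ s, of "\<lambda>n. c (r n + N) i"] L
      by (cases "i = j") (auto simp: o_def)
    then show ?case
      using strict_mono_o[OF r s]
      by (intro exI[of _ "r \<circ> s"] exI[of _ "L(j := a)"]) (auto simp: o_def)
  qed
  then obtain r L where r: "strict_mono r" and L: "\<forall>i\<in>T. (\<lambda>n. c (r n + N) i) \<longlonglongrightarrow> L i"
    by blast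
  have "strict_mono (\<lambda>n. r n + N)"
    using r by (simp add: strict_mono_def)
  then show thesis
    using that L by blast
qed

lemma normalized_dependence_limit:
  fixes c :: "nat \<Rightarrow> 'i \<Rightarrow> real" and v :: "nat \<Rightarrow> 'i \<Rightarrow> 'v::real_normed_vector"
  assumes T: "finite T" and norm1: "\<forall>\<^sub>F n in sequentially. (\<Sum>t\<in>T. \<bar>c n t\<bar>) = 1"
    and v: "\<forall>t\<in>T. (\<lambda>n. v n t) \<longlonglongrightarrow> w t"
    and lim0: "(\<lambda>n. \<Sum>t\<in>T. c n t *\<^sub>R v n t) \<longlonglongrightarrow> 0"
  obtains r L where "strict_mono r" "\<forall>t\<in>T. (\<lambda>n. c (r n) t) \<longlonglongrightarrow> L t"
    "(\<Sum>t\<in>T. \<bar>L t\<bar>) = 1" "(\<Sum>t\<in>T. L t *\<^sub>R w t) = 0"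
proof -
  have bound: "\<bar>c n t\<bar> \<le> (\<Sum>t\<in>T. \<bar>c n t\<bar>)" if "t \<in> T" for n t
    using that T by (intro member_le_sum) auto
  have "\<forall>\<^sub>F n in sequentially. \<forall>t\<in>T. \<bar>c n t\<bar> \<le> 1"
  proof (rule eventually_mono[OF norm1], intro ballI)
    fix n t assume "(\<Sum>t\<in>T. \<bar>c n t\<bar>) = 1" "t \<in> T"
    then show "\<bar>c n t\<bar> \<le> 1" using bound[of t n] by simp
  qed
  then obtain r L where r: "strict_mono r" and L: "\<forall>t\<in>T. (\<lambda>n. c (r n) t) \<longlonglongrightarrow> L t"
    using finite_family_convergent_subseq[OF T] by blast
  have "(\<lambda>n. \<Sum>t\<in>T. \<bar>c (r n) t\<bar>) \<longlonglongrightarrow> (\<Sum>t\<in>T. \<bar>L t\<bar>)"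
    using L by (intro tendsto_sum tendsto_rabs) auto
  moreover have "(\<lambda>n. \<Sum>t\<in>T. \<bar>c (r n) t\<bar>) \<longlonglongrightarrow> 1"
    using eventually_subseq[OF r norm1] by (rule tendsto_eventually)
  ultimately have L1: "(\<Sum>t\<in>T. \<bar>L t\<bar>) = 1"
    by (rule LIMSEQ_unique)
  have "(\<lambda>n. \<Sum>t\<in>T. c (r n) t *\<^sub>R v (r n) t) \<longlonglongrightarrow> (\<Sum>t\<in>T. L t *\<^sub>R w t)"
    using L v LIMSEQ_subseq_LIMSEQ[OF _ r, of "\<lambda>n. v n _"]
    by (intro tendsto_sum tendsto_scaleR) (auto simp: o_def)
  moreover have "(\<lambda>n. \<Sum>t\<in>T. c (r n) t *\<^sub>R v (r n) t) \<longlonglongrightarrow> 0"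
    using LIMSEQ_subseq_LIMSEQ[OF lim0 r] by (simp add: o_def)
  ultimately have "(\<Sum>t\<in>T. L t *\<^sub>R w t) = 0"
    by (rule LIMSEQ_unique)
  with r L L1 show thesis
    by (rule that)
qed

lemma eventually_lin_indep_bound:
  fixes v :: "'i \<Rightarrow> 'x::metric_space \<Rightarrow> 'v::real_normed_vector"
  assumes T: "finite T" and cont: "\<forall>t\<in>T. continuous (at x0) (v t)"
    and indep: "\<not> fam_lin_dep (\<lambda>t. v t x0) T"
  obtains c where "c > 0" "\<forall>\<^sub>F x in nhds x0. lin_indep_bound c (\<lambda>t. v t x) T"
proof (rule ccontr)
  assume "\<not> thesis"
  have "\<exists>x. dist x x0 < 1 / Suc n \<and> \<not> lin_indep_bound (1 / Suc n) (\<lambda>t. v t x) T" for n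
  proof -
    have "\<not> (\<forall>\<^sub>F x in nhds x0. lin_indep_bound (1 / Suc n) (\<lambda>t. v t x) T)"
      using that[of "1 / Suc n"] \<open>\<not> thesis\<close> by auto
    then show ?thesis
      unfolding eventually_nhds_metric by (metis divide_pos_pos of_nat_0_less_iff zero_less_Suc zero_less_one)
  qed
  then have "\<exists>x \<mu>. dist x x0 < 1 / Suc n \<and> norm (\<Sum>t\<in>T. \<mu> t *\<^sub>R v t x) < 1 / Suc n * (\<Sum>t\<in>T. \<bar>\<mu> t\<bar>)"
    for n
    by (auto simp: lin_indep_bound_def not_le)
  then obtain xs \<mu> where xs: "\<And>n. dist (xs n) x0 < 1 / Suc n"
    and small: "\<And>n. norm (\<Sum>t\<in>T. \<mu> n t *\<^sub>R v t (xs n)) < 1 / Suc n * (\<Sum>t\<in>T. \<bar>\<mu> n t\<bar>)"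
    by metis
  define S where "S n = (\<Sum>t\<in>T. \<bar>\<mu> n t\<bar>)" for n
  have S_pos: "S n > 0" for n
  proof -
    have "0 < 1 / real (Suc n) * S n"
      using small[of n] unfolding S_def by (meson le_less_trans norm_ge_zero)
    then show ?thesis by (auto simp: zero_less_divide_iff)
  qed
  define \<nu> where "\<nu> n t = \<mu> n t / S n" for n t
  have norm1: "(\<Sum>t\<in>T. \<bar>\<nu> n t\<bar>) = 1" for n
    using S_pos[of n] unfolding \<nu>_def S_def by (simp add: sum_divide_distrib[symmetric])
  have "norm (\<Sum>t\<in>T. \<nu> n t *\<^sub>R v t (xs n)) < 1 / Suc n" for n
  proof -
    have "(\<Sum>t\<in>T. \<nu> n t *\<^sub>R v t (xs n)) = (1 / S n) *\<^sub>R (\<Sum>t\<in>T. \<mu> n t *\<^sub>R v t (xs n))"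
      unfolding \<nu>_def by (simp add: scaleR_sum_right)
    then show ?thesis
      using small[of n] S_pos[of n] unfolding S_def by (simp add: divide_less_eq)
  qed
  then have lim0: "(\<lambda>n. \<Sum>t\<in>T. \<nu> n t *\<^sub>R v t (xs n)) \<longlonglongrightarrow> 0"
    by (rule LIMSEQ_norm_0)
  have "(\<lambda>n. dist (xs n) x0) \<longlonglongrightarrow> 0"
    by (rule LIMSEQ_norm_0) (use xs in simp)
  then have "xs \<longlonglongrightarrow> x0"
    by (subst tendsto_dist_iff)
  then have "\<forall>t\<in>T. (\<lambda>n. v t (xs n)) \<longlonglongrightarrow> v t x0"
    using cont by (auto intro: isCont_tendsto_compose)
  with norm1 lim0 obtain L where L: "(\<Sum>t\<in>T. \<bar>L t\<bar>) = 1" "(\<Sum>t\<in>T. L t *\<^sub>R v t x0) = 0"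
    by (auto intro: normalized_dependence_limit[OF T, of \<nu> "\<lambda>n t. v t (xs n)"])
  have "\<exists>t\<in>T. L t \<noteq> 0"
  proof (rule ccontr)
    assume "\<not> (\<exists>t\<in>T. L t \<noteq> 0)"
    then show False
      using L(1) by simp
  qed
  then obtain t where "t \<in> T" "L t \<noteq> 0"
    by blast
  then show False
    using indep fam_lin_depI[of t T L "\<lambda>t. v t x0"] L(2) by simp
qed

section \<open>Positive linear dependence\<close>

lemma pos_lin_depI:
  assumes "\<forall>i\<in>K. \<alpha> i \<ge> 0" "(\<exists>i\<in>K. \<alpha> i \<noteq> 0) \<or> (\<exists>i\<in>T. \<beta> i \<noteq> 0)"
    "(\<Sum>i\<in>K. \<alpha> i *\<^sub>R a i) + (\<Sum>i\<in>T. \<beta> i *\<^sub>R b i) = 0"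
  shows "pos_lin_dep a K b T"
  using assms unfolding pos_lin_dep_def by blast

text \<open>The Caratheodory-type exchange step: a linear dependence among the vectors indexed by
  \<open>K - {k}\<close> and \<open>T\<close> can be subtracted from a strictly positive dependence until one
  coefficient on \<open>K\<close> vanishes, while the coefficient of \<open>k\<close> stays positive.\<close>
lemma pos_lin_dep_exchange:
  fixes v :: "'i \<Rightarrow> 'v::real_vector"
  assumes K: "finite K" and T: "finite T" and KT: "K \<inter> T = {}" and T_indep: "\<not> fam_lin_dep v T"
    and k: "k \<in> K" and \<alpha>_pos: "\<forall>i\<in>K. \<alpha> i > 0"
    and sum0: "(\<Sum>i\<in>K. \<alpha> i *\<^sub>R v i) + (\<Sum>i\<in>T. \<beta> i *\<^sub>R v i) = 0"
    and dep: "fam_lin_dep v ((K - {k}) \<union> T)"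
  obtains i0 where "i0 \<in> K" "pos_lin_dep v (K - {i0}) v T"
proof -
  obtain c where c_nz: "\<exists>i\<in>(K - {k}) \<union> T. c i \<noteq> 0"
    and c_sum: "(\<Sum>i\<in>(K - {k}) \<union> T. c i *\<^sub>R v i) = 0"
    using dep unfolding fam_lin_dep_def by blast
  have c_split: "(\<Sum>i\<in>K - {k}. c i *\<^sub>R v i) + (\<Sum>i\<in>T. c i *\<^sub>R v i) = 0"
    using c_sum KT K T by (subst (asm) sum.union_disjoint) auto
  obtain i1 where i1: "i1 \<in> K - {k}" "c i1 \<noteq> 0"
  proof (rule ccontr)
    assume "\<not> thesis"
    then have "\<forall>i\<in>K - {k}. c i = 0" using that by blast
    then show False
      using c_nz c_split T_indep unfolding fam_lin_dep_def by auto
  qed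
  define e where "e i = (if i = k then 0 else c i / c i1)" for i
  have e_sum: "(\<Sum>i\<in>K. e i *\<^sub>R v i) + (\<Sum>i\<in>T. e i *\<^sub>R v i) = 0"
  proof -
    have "(\<Sum>i\<in>K. e i *\<^sub>R v i) = (1 / c i1) *\<^sub>R (\<Sum>i\<in>K - {k}. c i *\<^sub>R v i)"
      using K k by (simp add: sum.remove[OF K k] e_def scaleR_sum_right)
    moreover have "(\<Sum>i\<in>T. e i *\<^sub>R v i) = (1 / c i1) *\<^sub>R (\<Sum>i\<in>T. c i *\<^sub>R v i)"
      using KT k by (auto simp: e_def scaleR_sum_right intro!: sum.cong)
    ultimately show ?thesis
      using c_split by (simp flip: scaleR_right_distrib)
  qed
  define P where "P = {i\<in>K. e i > 0}"
  have "i1 \<in> P"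
    using i1 unfolding P_def e_def by auto
  define s where "s = Min ((\<lambda>i. \<alpha> i / e i) ` P)"
  have "s \<in> (\<lambda>i. \<alpha> i / e i) ` P"
    unfolding s_def using K \<open>i1 \<in> P\<close> by (intro Min_in) (auto simp: P_def)
  then obtain i0 where i0: "i0 \<in> P" "s = \<alpha> i0 / e i0"
    by blast
  have s_le: "s \<le> \<alpha> i / e i" if "i \<in> P" for i
    using K that unfolding s_def P_def by (intro Min_le) auto
  have "s \<ge> 0"
    using i0 \<alpha>_pos unfolding P_def by auto
  define \<alpha>' where "\<alpha>' i = \<alpha> i - s * e i" for i
  define \<beta>' where "\<beta>' i = \<beta> i - s * e i" for i
  have \<alpha>'_nonneg: "\<alpha>' i \<ge> 0" if "i \<in> K" for i
  proof (cases "e i > 0")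
    case True
    then show ?thesis
      using s_le[of i] that unfolding \<alpha>'_def P_def by (simp add: le_divide_eq)
  next
    case False
    then show ?thesis
      using \<open>s \<ge> 0\<close> \<alpha>_pos that unfolding \<alpha>'_def by (smt (verit) mult_nonneg_nonpos)
  qed
  have "\<alpha>' i0 = 0"
    using i0 unfolding \<alpha>'_def P_def by simp
  have "i0 \<noteq> k" "\<alpha>' k > 0"
    using i0 \<alpha>_pos k unfolding P_def \<alpha>'_def e_def by auto
  have "(\<Sum>i\<in>K. \<alpha>' i *\<^sub>R v i) + (\<Sum>i\<in>T. \<beta>' i *\<^sub>R v i)
      = ((\<Sum>i\<in>K. \<alpha> i *\<^sub>R v i) + (\<Sum>i\<in>T. \<beta> i *\<^sub>R v i))
        - s *\<^sub>R ((\<Sum>i\<in>K. e i *\<^sub>R v i) + (\<Sum>i\<in>T. e i *\<^sub>R v i))"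
    unfolding \<alpha>'_def \<beta>'_def
    by (simp add: scaleR_diff_left sum_subtractf scaleR_sum_right scaleR_right_distrib algebra_simps)
  also have "\<dots> = 0"
    using sum0 e_sum by simp
  finally have "(\<Sum>i\<in>K - {i0}. \<alpha>' i *\<^sub>R v i) + (\<Sum>i\<in>T. \<beta>' i *\<^sub>R v i) = 0"
    using \<open>\<alpha>' i0 = 0\<close> i0(1) K by (simp add: sum.remove[of K i0] P_def)
  then have "pos_lin_dep v (K - {i0}) v T"
    using \<alpha>'_nonneg \<open>\<alpha>' k > 0\<close> \<open>i0 \<noteq> k\<close> k by (intro pos_lin_depI[of _ \<alpha>' _ \<beta>']) auto
  then show thesis
    using i0(1) that unfolding P_def by blast
qed

lemma pos_lin_dep_minimal:
  fixes v :: "'i \<Rightarrow> 'v::real_vector"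
  assumes V: "finite V" and T: "finite T" and VT: "V \<inter> T = {}"
    and T_indep: "\<not> fam_lin_dep v T" and dep: "pos_lin_dep v V v T"
  obtains K \<alpha> \<beta> where "K \<subseteq> V" "K \<noteq> {}" "\<forall>i\<in>K. \<alpha> i > 0"
    "(\<Sum>i\<in>K. \<alpha> i *\<^sub>R v i) + (\<Sum>i\<in>T. \<beta> i *\<^sub>R v i) = 0"
    "\<forall>k\<in>K. \<not> fam_lin_dep v ((K - {k}) \<union> T)"
proof -
  obtain K where KV: "K \<subseteq> V" and K_dep: "pos_lin_dep v K v T"
    and K_min: "\<And>K'. K' \<subseteq> V \<Longrightarrow> pos_lin_dep v K' v T \<Longrightarrow> card K \<le> card K'"
    using ex_has_least_nat[of "\<lambda>K. K \<subseteq> V \<and> pos_lin_dep v K v T" V card] dep by blast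
  have K: "finite K"
    using KV V finite_subset by blast
  have no_drop: "\<not> pos_lin_dep v (K - {i}) v T" if "i \<in> K" for i
    using K_min[of "K - {i}"] KV card_Diff1_less[OF K that] by force
  obtain \<alpha> \<beta> where \<alpha>_nonneg: "\<forall>i\<in>K. \<alpha> i \<ge> 0" and nz: "(\<exists>i\<in>K. \<alpha> i \<noteq> 0) \<or> (\<exists>i\<in>T. \<beta> i \<noteq> 0)"
    and sum0: "(\<Sum>i\<in>K. \<alpha> i *\<^sub>R v i) + (\<Sum>i\<in>T. \<beta> i *\<^sub>R v i) = 0"
    using K_dep unfolding pos_lin_dep_def by blast
  have \<alpha>_pos: "\<forall>i\<in>K. \<alpha> i > 0"
  proof (rule ccontr)
    assume "\<not> (\<forall>i\<in>K. \<alpha> i > 0)"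
    then obtain i where i: "i \<in> K" "\<alpha> i = 0"
      using \<alpha>_nonneg by force
    then have "pos_lin_dep v (K - {i}) v T"
      using \<alpha>_nonneg nz sum0 K by (intro pos_lin_depI[of _ \<alpha> _ \<beta>]) (auto simp: sum.remove[of K i])
    then show False
      using no_drop i(1) by blast
  qed
  have "K \<noteq> {}"
    using nz sum0 T_indep unfolding fam_lin_dep_def by auto
  moreover have "\<forall>k\<in>K. \<not> fam_lin_dep v ((K - {k}) \<union> T)"
    using pos_lin_dep_exchange[OF K T _ T_indep _ \<alpha>_pos sum0] no_drop KV VT by blast
  ultimately show thesis
    using that KV \<alpha>_pos sum0 by blast
qed

lemma lin_dep_coeffs_proportional:
  fixes w :: "'i \<Rightarrow> 'v::real_vector"
  assumes S: "finite S" and k: "k \<in> S" and indep: "\<not> fam_lin_dep w (S - {k})"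
    and a: "(\<Sum>i\<in>S. a i *\<^sub>R w i) = 0" and b: "(\<Sum>i\<in>S. b i *\<^sub>R w i) = 0" and "a k \<noteq> 0"
    and i: "i \<in> S"
  shows "b i = (b k / a k) * a i"
proof -
  define e where "e j = b j - (b k / a k) * a j" for j
  have "(\<Sum>j\<in>S. e j *\<^sub>R w j) = (\<Sum>j\<in>S. b j *\<^sub>R w j) - (b k / a k) *\<^sub>R (\<Sum>j\<in>S. a j *\<^sub>R w j)"
    unfolding e_def by (simp add: scaleR_diff_left sum_subtractf scaleR_sum_right)
  then have "(\<Sum>j\<in>S. e j *\<^sub>R w j) = 0"
    using a b by simp
  moreover have "e k = 0"
    using \<open>a k \<noteq> 0\<close> unfolding e_def by simp
  ultimately have "(\<Sum>j\<in>S - {k}. e j *\<^sub>R w j) = 0"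
    using S k by (simp add: sum.remove)
  then have "\<forall>j\<in>S - {k}. e j = 0"
    using indep fam_lin_depI[of _ "S - {k}" e w] by blast
  then show ?thesis
    using \<open>e k = 0\<close> i unfolding e_def by (cases "i = k") auto
qed

lemma frequently_positive_dependence:
  fixes w :: "nat \<Rightarrow> 'i \<Rightarrow> 'v::real_normed_vector"
  assumes K: "finite K" "K \<noteq> {}" and T: "finite T" and KT: "K \<inter> T = {}"
    and \<alpha>_pos: "\<forall>i\<in>K. \<alpha> i > 0"
    and sum0: "(\<Sum>i\<in>K. \<alpha> i *\<^sub>R wb i) + (\<Sum>i\<in>T. \<beta> i *\<^sub>R wb i) = 0"
    and minimal: "\<forall>k\<in>K. \<not> fam_lin_dep wb ((K - {k}) \<union> T)"
    and lim: "\<forall>i\<in>K \<union> T. (\<lambda>n. w n i) \<longlonglongrightarrow> wb i"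
    and dep: "\<forall>\<^sub>F n in sequentially. fam_lin_dep (w n) (K \<union> T)"
  shows "\<exists>\<^sub>F n in sequentially. \<exists>c. (\<forall>i\<in>K. c i > 0) \<and> (\<Sum>i\<in>K \<union> T. c i *\<^sub>R w n i) = 0"
proof (rule ccontr)
  assume no_pos: "\<not> ?thesis"
  define S where "S = K \<union> T"
  have S: "finite S"
    using K T unfolding S_def by simp
  obtain k0 where k0: "k0 \<in> K"
    using K(2) by blast
  have "\<forall>n. \<exists>c. fam_lin_dep (w n) S \<longrightarrow> (\<exists>i\<in>S. c i \<noteq> 0) \<and> (\<Sum>i\<in>S. c i *\<^sub>R w n i) = 0"
    unfolding fam_lin_dep_def by blast
  then obtain c where c: "\<And>n. fam_lin_dep (w n) S \<Longrightarrow> (\<exists>i\<in>S. c n i \<noteq> 0) \<and> (\<Sum>i\<in>S. c n i *\<^sub>R w n i) = 0"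
    by metis
  \<comment> \<open>normalise to unit \<open>\<ell>\<^sub>1\<close>-norm, with the sign making the \<open>k0\<close>-coefficient nonnegative\<close>
  define d where "d n i = (if c n k0 < 0 then -1 else 1) * c n i / (\<Sum>j\<in>S. \<bar>c n j\<bar>)" for n i
  have d: "(\<Sum>i\<in>S. \<bar>d n i\<bar>) = 1 \<and> d n k0 \<ge> 0 \<and> (\<Sum>i\<in>S. d n i *\<^sub>R w n i) = 0"
    if dep_n: "fam_lin_dep (w n) S" for n
  proof -
    obtain i where "i \<in> S" "c n i \<noteq> 0"
      using c[OF dep_n] by blast
    moreover have "\<bar>c n i\<bar> \<le> (\<Sum>j\<in>S. \<bar>c n j\<bar>)"
      using \<open>i \<in> S\<close> S by (intro member_le_sum) auto
    ultimately have pos: "(\<Sum>j\<in>S. \<bar>c n j\<bar>) > 0"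
      by simp
    have "(\<Sum>i\<in>S. d n i *\<^sub>R w n i)
        = ((if c n k0 < 0 then -1 else 1) / (\<Sum>j\<in>S. \<bar>c n j\<bar>)) *\<^sub>R (\<Sum>i\<in>S. c n i *\<^sub>R w n i)"
      unfolding d_def by (simp add: scaleR_sum_right)
    moreover have "(\<Sum>i\<in>S. \<bar>d n i\<bar>) = 1"
      unfolding d_def using pos by (simp add: abs_mult flip: sum_divide_distrib)
    ultimately show ?thesis
      using pos c[OF dep_n] unfolding d_def by (auto simp: zero_le_divide_iff)
  qed
  have ev_d: "\<forall>\<^sub>F n in sequentially. (\<Sum>i\<in>S. \<bar>d n i\<bar>) = 1 \<and> d n k0 \<ge> 0 \<and> (\<Sum>i\<in>S. d n i *\<^sub>R w n i) = 0"
    using dep unfolding S_def[symmetric] by (rule eventually_mono) (rule d)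
  have "(\<lambda>n. \<Sum>i\<in>S. d n i *\<^sub>R w n i) \<longlonglongrightarrow> 0"
    using ev_d by (auto intro: tendsto_eventually elim: eventually_mono)
  moreover have "\<forall>\<^sub>F n in sequentially. (\<Sum>i\<in>S. \<bar>d n i\<bar>) = 1"
    using ev_d by (rule eventually_mono) simp
  ultimately obtain r D where r: "strict_mono r" and D: "\<forall>i\<in>S. (\<lambda>n. d (r n) i) \<longlonglongrightarrow> D i"
    and D1: "(\<Sum>i\<in>S. \<bar>D i\<bar>) = 1" and D0: "(\<Sum>i\<in>S. D i *\<^sub>R wb i) = 0"
    using normalized_dependence_limit[OF S _ lim[folded S_def]] by blast
  have ev_dr: "\<forall>\<^sub>F n in sequentially. d (r n) k0 \<ge> 0 \<and> (\<Sum>i\<in>S. d (r n) i *\<^sub>R w (r n) i) = 0"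
    using eventually_subseq[OF r ev_d] by (auto elim: eventually_mono)
  have "k0 \<in> S"
    using k0 unfolding S_def by blast
  then have "D k0 \<ge> 0"
    using D ev_dr by (auto intro: tendsto_lowerbound elim: eventually_mono)
  \<comment> \<open>by minimality the dependence is unique up to scaling, so \<open>D\<close> is a positive multiple of \<open>(\<alpha>, \<beta>)\<close>\<close>
  define ab where "ab i = (if i \<in> K then \<alpha> i else \<beta> i)" for i
  have "(\<Sum>i\<in>S. ab i *\<^sub>R wb i) = (\<Sum>i\<in>K. ab i *\<^sub>R wb i) + (\<Sum>i\<in>T. ab i *\<^sub>R wb i)"
    unfolding S_def by (rule sum.union_disjoint[OF K(1) T KT])
  also have "\<dots> = (\<Sum>i\<in>K. \<alpha> i *\<^sub>R wb i) + (\<Sum>i\<in>T. \<beta> i *\<^sub>R wb i)"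
    using KT unfolding ab_def by (intro arg_cong2[where f="(+)"] sum.cong) auto
  finally have "(\<Sum>i\<in>S. ab i *\<^sub>R wb i) = 0"
    using sum0 by simp
  moreover have "S - {k0} = (K - {k0}) \<union> T"
    using KT k0 unfolding S_def by blast
  ultimately have D_prop: "D i = (D k0 / \<alpha> k0) * ab i" if "i \<in> S" for i
    using lin_dep_coeffs_proportional[OF S \<open>k0 \<in> S\<close> _ _ D0, of ab] minimal k0 \<alpha>_pos that
    unfolding ab_def by auto
  have "D k0 \<noteq> 0"
  proof
    assume "D k0 = 0"
    then have "\<forall>i\<in>S. D i = 0"
      using D_prop by simp
    then show False
      using D1 by simp
  qed
  then have "D k0 / \<alpha> k0 > 0"
    using \<open>D k0 \<ge> 0\<close> \<alpha>_pos k0 by simp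
  have D_pos: "D i > 0" if "i \<in> K" for i
  proof -
    have "D i = (D k0 / \<alpha> k0) * \<alpha> i"
      using D_prop[of i] that unfolding S_def ab_def by simp
    then show ?thesis
      using \<open>D k0 / \<alpha> k0 > 0\<close> \<alpha>_pos that by (metis mult_pos_pos)
  qed
  have "\<forall>\<^sub>F n in sequentially. \<forall>i\<in>K. d (r n) i > 0"
    using D D_pos unfolding S_def by (intro eventually_ball_finite[OF K(1)] ballI order_tendstoD) auto
  moreover have "\<forall>\<^sub>F n in sequentially. \<not> (\<exists>c. (\<forall>i\<in>K. c i > 0) \<and> (\<Sum>i\<in>S. c i *\<^sub>R w n i) = 0)"
    using no_pos unfolding S_def not_frequently .
  from eventually_subseq[OF r this]
  have "\<forall>\<^sub>F n in sequentially. \<not> (\<exists>c. (\<forall>i\<in>K. c i > 0) \<and> (\<Sum>i\<in>S. c i *\<^sub>R w (r n) i) = 0)" .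
  ultimately have "\<forall>\<^sub>F n in sequentially. False"
    using ev_dr by eventually_elim blast
  then show False
    by simp
qed

section \<open>Derivatives and the infeasibility measure\<close>

lemma has_real_derivative_le_of_right_bound:
  fixes Q :: "real \<Rightarrow> real"
  assumes "(Q has_real_derivative D) (at 0)"
    and "\<forall>\<^sub>F t in at_right 0. Q t - Q 0 \<le> C * t"
  shows "D \<le> C"
proof -
  have "((\<lambda>t. (Q t - Q 0) / t) \<longlongrightarrow> D) (at_right 0)"
    using assms(1) by (simp add: has_field_derivative_iff filterlim_at_split)
  moreover have "\<forall>\<^sub>F t in at_right 0. (Q t - Q 0) / t \<le> C"
    using assms(2) eventually_at_right_less[of 0]
    by eventually_elim (simp add: pos_divide_le_eq)
  ultimately show ?thesis
    by (simp add: tendsto_upperbound)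
qed

lemma has_derivative_along_line:
  fixes g :: "'v::real_normed_vector \<Rightarrow> real"
  assumes "(g has_derivative g') (at z)"
  shows "((\<lambda>t. g (z + t *\<^sub>R d)) has_real_derivative g' d) (at 0)"
proof -
  have "((\<lambda>t. z + t *\<^sub>R d) has_derivative (\<lambda>t. t *\<^sub>R d)) (at 0)"
    by (auto intro!: derivative_eq_intros)
  then have "((\<lambda>t. g (z + t *\<^sub>R d)) has_derivative (\<lambda>t. g' (t *\<^sub>R d))) (at 0)"
    using has_derivative_compose[of "\<lambda>t. z + t *\<^sub>R d" _ 0 UNIV g g'] assms by simp
  moreover have "g' (t *\<^sub>R d) = g' d * t" for t
    using linear_scale[OF has_derivative_linear[OF assms]] by (simp add: mult.commute)
  ultimately show ?thesis
    by (simp add: has_field_derivative_def)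
qed

lemma convex_on_tangent_le:
  fixes g :: "'v::real_normed_vector \<Rightarrow> real"
  assumes convex: "convex_on UNIV g" and deriv: "(g has_derivative g') (at z)"
  shows "g z + g' (p - z) \<le> g p"
proof -
  have "\<forall>\<^sub>F t in at_right 0. g (z + t *\<^sub>R (p - z)) - g (z + 0 *\<^sub>R (p - z)) \<le> (g p - g z) * t"
    using eventually_at_right_real[OF zero_less_one]
  proof eventually_elim
    case (elim t)
    have "g ((1 - t) *\<^sub>R z + t *\<^sub>R p) \<le> (1 - t) * g z + t * g p"
      using elim by (intro convex_onD[OF convex]) auto
    moreover have "z + t *\<^sub>R (p - z) = (1 - t) *\<^sub>R z + t *\<^sub>R p"
      by (simp add: algebra_simps)
    ultimately show ?case
      by (simp add: algebra_simps)
  qed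
  from has_real_derivative_le_of_right_bound[OF has_derivative_along_line[OF deriv] this]
  show ?thesis
    by simp
qed

lemma has_real_derivative_pos_part_sq:
  fixes x :: real
  shows "((\<lambda>s. (max s 0)\<^sup>2) has_real_derivative 2 * max x 0) (at x)"
proof (cases x "0::real" rule: linorder_cases)
  case less
  have "((\<lambda>s. 0) has_real_derivative 2 * max x 0) (at x)"
    using less by simp
  then show ?thesis
    by (rule has_field_derivative_transform_within_open[where S="{..<0}"]) (use less in auto)
next
  case greater
  have "((\<lambda>s. s\<^sup>2) has_real_derivative 2 * max x 0) (at x)"
    using greater by (auto intro!: derivative_eq_intros)
  then show ?thesis
    by (rule has_field_derivative_transform_within_open[where S="{0<..}"]) (use greater in auto)
next
  case equal
  have "((\<lambda>s::real. (max s 0)\<^sup>2 / s) \<longlongrightarrow> 0) (at 0)"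
  proof (rule Lim_null_comparison)
    have "norm ((max s 0)\<^sup>2 / s) \<le> \<bar>s\<bar>" for s :: real
      by (cases "s > 0") (simp_all add: power2_eq_square)
    then show "\<forall>\<^sub>F s in at 0. norm ((max s 0)\<^sup>2 / s) \<le> \<bar>s\<bar>"
      by simp
    show "((\<lambda>s. \<bar>s\<bar>) \<longlongrightarrow> 0) (at (0::real))"
      using tendsto_rabs[OF tendsto_ident_at[of 0 UNIV]] by simp
  qed
  then show ?thesis
    using equal by (simp add: has_field_derivative_iff)
qed

definition infeasibility :: "('i \<Rightarrow> 'v \<Rightarrow> real) \<Rightarrow> 'i set \<Rightarrow> 'v \<Rightarrow> real" where
  "infeasibility g I y = sqrt (\<Sum>i\<in>I. (max (g i y) 0)\<^sup>2)"

lemma infeasibility_nonneg: "infeasibility g I y \<ge> 0"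
  unfolding infeasibility_def by (simp add: sum_nonneg)

lemma infeasibility_sq: "(infeasibility g I y)\<^sup>2 = (\<Sum>i\<in>I. (max (g i y) 0)\<^sup>2)"
  unfolding infeasibility_def by (simp add: sum_nonneg)

lemma infeasibility_eq_0_iff:
  "finite I \<Longrightarrow> infeasibility g I y = 0 \<longleftrightarrow> (\<forall>i\<in>I. g i y \<le> 0)"
  unfolding infeasibility_def by (simp add: sum_nonneg_eq_0_iff max_def)

lemma continuous_on_infeasibility:
  "(\<And>i. i \<in> I \<Longrightarrow> continuous_on S (g i)) \<Longrightarrow> continuous_on S (infeasibility g I)"
  unfolding infeasibility_def by (intro continuous_intros) auto

text \<open>Differentiating the square of the infeasibility avoids the non-smoothness of the root.\<close>
lemma infeasibility_directional_bound:
  fixes g :: "'i \<Rightarrow> 'v::real_normed_vector \<Rightarrow> real"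
  assumes I: "finite I" and deriv: "\<And>i. i \<in> I \<Longrightarrow> (g i has_derivative g' i) (at z)"
    and \<epsilon>: "\<epsilon> \<ge> 0" and t0: "t0 > 0"
    and decrease: "\<And>t. 0 < t \<Longrightarrow> t < t0 \<Longrightarrow>
      infeasibility g I z - \<epsilon> * t * norm d \<le> infeasibility g I (z + t *\<^sub>R d)"
  shows "- (\<epsilon> * infeasibility g I z * norm d) \<le> (\<Sum>i\<in>I. max (g i z) 0 * g' i d)"
proof -
  have sq_lower: "a\<^sup>2 - 2 * a * b \<le> c\<^sup>2" if "a - b \<le> c" "0 \<le> a" "0 \<le> b" "0 \<le> c" for a b c :: real
  proof (cases "a \<le> b")
    case True
    have "a\<^sup>2 - 2 * a * b = a * (a - 2 * b)"
      by (simp add: power2_eq_square algebra_simps)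
    also have "\<dots> \<le> 0"
      using True that by (intro mult_nonneg_nonpos) auto
    finally show ?thesis
      using zero_le_power2[of c] by linarith
  next
    case False
    then have "(a - b)\<^sup>2 \<le> c\<^sup>2"
      using that by (intro power_mono) auto
    moreover have "a\<^sup>2 - 2 * a * b \<le> (a - b)\<^sup>2"
      by (simp add: power2_diff)
    ultimately show ?thesis
      by linarith
  qed
  define R where "R t = infeasibility g I (z + t *\<^sub>R d)" for t
  define P where "P t = (R t)\<^sup>2" for t
  have "((\<lambda>t. (max (g i (z + t *\<^sub>R d)) 0)\<^sup>2) has_real_derivative 2 * max (g i z) 0 * g' i d) (at 0)"
    if "i \<in> I" for i
    using DERIV_chain2[OF has_real_derivative_pos_part_sq has_derivative_along_line[OF deriv[OF that]]]
    by simp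
  then have P_deriv: "(P has_real_derivative (\<Sum>i\<in>I. 2 * max (g i z) 0 * g' i d)) (at 0)"
    unfolding P_def R_def infeasibility_sq by (rule DERIV_sum)
  have "\<forall>\<^sub>F t in at_right 0. - P t - - P 0 \<le> (2 * \<epsilon> * R 0 * norm d) * t"
    using eventually_at_right_real[OF t0]
  proof eventually_elim
    case (elim t)
    have "R 0 - \<epsilon> * t * norm d \<le> R t"
      using decrease elim unfolding R_def by simp
    moreover have "R 0 \<ge> 0" "\<epsilon> * t * norm d \<ge> 0" "R t \<ge> 0"
      using \<epsilon> elim unfolding R_def by (auto simp: infeasibility_nonneg)
    ultimately have "(R 0)\<^sup>2 - 2 * R 0 * (\<epsilon> * t * norm d) \<le> (R t)\<^sup>2"
      by (rule sq_lower)
    then show ?case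
      unfolding P_def by (simp add: algebra_simps)
  qed
  from has_real_derivative_le_of_right_bound[OF DERIV_minus[OF P_deriv] this]
  have "- (\<Sum>i\<in>I. 2 * max (g i z) 0 * g' i d) \<le> 2 * \<epsilon> * R 0 * norm d" .
  moreover have "(\<Sum>i\<in>I. 2 * max (g i z) 0 * g' i d) = 2 * (\<Sum>i\<in>I. max (g i z) 0 * g' i d)"
    by (simp add: sum_distrib_left mult.assoc)
  moreover have "2 * \<epsilon> * R 0 * norm d = 2 * (\<epsilon> * infeasibility g I z * norm d)"
    unfolding R_def by simp
  ultimately show ?thesis
    by linarith
qed

section \<open>Affine constraint sets\<close>

lemma near_span_if_approx_normal:
  fixes \<gamma> :: "'v::euclidean_space"
  assumes "\<epsilon> \<ge> 0" and normal: "\<And>d. \<forall>a\<in>A. a \<bullet> d = 0 \<Longrightarrow> - (\<epsilon> * norm d) \<le> \<gamma> \<bullet> d"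
  obtains s where "s \<in> span A" "norm (\<gamma> - s) \<le> \<epsilon>"
proof -
  obtain s e where s: "s \<in> span A" and e: "\<And>w. w \<in> span A \<Longrightarrow> orthogonal e w" and \<gamma>: "\<gamma> = s + e"
    using orthogonal_subspace_decomp_exists by blast
  have "\<forall>a\<in>A. a \<bullet> (- e) = 0"
  proof
    fix a assume "a \<in> A"
    then have "orthogonal e a"
      using e span_base by blast
    then show "a \<bullet> (- e) = 0"
      by (simp add: orthogonal_def inner_commute)
  qed
  then have "- (\<epsilon> * norm e) \<le> \<gamma> \<bullet> (- e)"
    using normal[of "- e"] by simp
  moreover have "\<gamma> \<bullet> (- e) = - (norm e)\<^sup>2"
    using \<gamma> e[OF s] by (simp add: orthogonal_def inner_add_left inner_add_right inner_commute power2_norm_eq_inner)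
  ultimately have "norm e * norm e \<le> \<epsilon> * norm e"
    by (simp add: power2_eq_square)
  then have "norm e \<le> \<epsilon>"
    using \<open>\<epsilon> \<ge> 0\<close> mult_right_le_imp_le[of "norm e" "norm e" \<epsilon>]
    by (cases "norm e = 0") simp_all
  then show thesis
    using that s \<gamma> by simp
qed

lemma affine_constraints_eq_if_span_eq:
  fixes a :: "'i \<Rightarrow> 'v::real_inner"
  assumes TJ: "T \<subseteq> J" and span: "span (a ` T) = span (a ` J)" and y0: "\<forall>j\<in>J. a j \<bullet> y0 = b j"
  shows "{y. \<forall>j\<in>J. a j \<bullet> y = b j} = {y. \<forall>t\<in>T. a t \<bullet> y = b t}"
proof (intro equalityI subsetI)
  fix y assume "y \<in> {y. \<forall>j\<in>J. a j \<bullet> y = b j}"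
  then show "y \<in> {y. \<forall>t\<in>T. a t \<bullet> y = b t}"
    using TJ by blast
next
  fix y assume "y \<in> {y. \<forall>t\<in>T. a t \<bullet> y = b t}"
  then have y: "\<forall>t\<in>T. a t \<bullet> y = b t"
    by simp
  have "a j \<bullet> y = b j" if j: "j \<in> J" for j
  proof -
    have "a j \<in> span (a ` T)"
      using span_base[of "a j" "a ` J"] j span by simp
    moreover have "orthogonal (y - y0) (a t)" if "t \<in> T" for t
    proof -
      have "y \<bullet> a t = b t" "y0 \<bullet> a t = b t"
        using that y y0 TJ by (auto simp: inner_commute)
      then show ?thesis
        by (simp add: orthogonal_def inner_diff_left)
    qed
    ultimately have "orthogonal (y - y0) (a j)"
      by (auto intro: orthogonal_to_span)
    then have "y \<bullet> a j = y0 \<bullet> a j"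
      by (simp add: orthogonal_def inner_diff_left)
    then show ?thesis
      using y0 j by (metis inner_commute)
  qed
  then show "y \<in> {y. \<forall>j\<in>J. a j \<bullet> y = b j}"
    by simp
qed

lemma norm_closest_point_affine_le:
  fixes a :: "'i \<Rightarrow> 'v::euclidean_space"
  assumes T: "finite T" and c: "c > 0" "lin_indep_bound c a T"
    and L: "L = {y. \<forall>t\<in>T. a t \<bullet> y = b t}" "L \<noteq> {}"
  shows "norm (y - closest_point L y) \<le> (\<Sum>t\<in>T. \<bar>a t \<bullet> y - b t\<bar>) / c"
proof -
  define q where "q = closest_point L y"
  define M where "M = (\<Sum>t\<in>T. \<bar>a t \<bullet> y - b t\<bar>)"
  have L_Int: "L = (\<Inter>t\<in>T. {y. a t \<bullet> y = b t})"
    using L(1) by auto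
  have "closed L" "convex L"
    unfolding L_Int by (auto intro!: closed_INT convex_INT closed_hyperplane convex_hyperplane)
  have q: "q \<in> L" "\<forall>z\<in>L. dist y q \<le> dist y z"
    unfolding q_def using closest_point_exists[OF \<open>closed L\<close> L(2)] by auto
  have "(y - q) \<bullet> d = 0" if d: "\<forall>t\<in>T. a t \<bullet> d = 0" for d
  proof -
    have "q + d \<in> L" "q - d \<in> L"
      using q(1) d unfolding L(1) by (auto simp: inner_add_right inner_diff_right)
    from this[THEN any_closest_point_dot[OF \<open>convex L\<close> \<open>closed L\<close> q(1) _ q(2)]]
    show ?thesis
      by simp
  qed
  then obtain s where "s \<in> span (a ` T)" "norm ((y - q) - s) \<le> 0"
    using near_span_if_approx_normal[of 0 "a ` T" "y - q"] by force
  then have in_span: "y - q \<in> span (a ` T)"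
    by simp
  have inj: "inj_on a T"
    using inj_on_if_not_fam_lin_dep[OF T not_fam_lin_dep_if_lin_indep_bound[OF c T]] .
  obtain \<mu> where \<mu>: "y - q = (\<Sum>t\<in>T. \<mu> t *\<^sub>R a t)"
    using span_image_sum_repr[OF T inj in_span] by blast
  have "(norm (y - q))\<^sup>2 = (\<Sum>t\<in>T. \<mu> t * (a t \<bullet> y - b t))"
    using q(1) unfolding L(1) power2_norm_eq_inner
    by (subst (2) \<mu>) (simp add: inner_sum_right inner_diff_right inner_commute)
  also have "\<dots> \<le> (\<Sum>t\<in>T. \<bar>\<mu> t\<bar> * M)"
  proof (rule sum_mono)
    fix t assume "t \<in> T"
    then have "\<bar>a t \<bullet> y - b t\<bar> \<le> M"
      unfolding M_def using T by (intro member_le_sum) auto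
    have "\<mu> t * (a t \<bullet> y - b t) \<le> \<bar>\<mu> t\<bar> * \<bar>a t \<bullet> y - b t\<bar>"
      by (simp flip: abs_mult)
    also have "\<dots> \<le> \<bar>\<mu> t\<bar> * M"
      using \<open>\<bar>a t \<bullet> y - b t\<bar> \<le> M\<close> by (rule mult_left_mono) simp
    finally show "\<mu> t * (a t \<bullet> y - b t) \<le> \<bar>\<mu> t\<bar> * M" .
  qed
  also have "\<dots> = (\<Sum>t\<in>T. \<bar>\<mu> t\<bar>) * M"
    by (simp add: sum_distrib_right)
  finally have "c * (norm (y - q))\<^sup>2 \<le> (c * (\<Sum>t\<in>T. \<bar>\<mu> t\<bar>)) * M"
    using c by (simp add: mult.assoc)
  also have "\<dots> \<le> norm (y - q) * M"
    using c(2) \<mu> unfolding lin_indep_bound_def M_def by (intro mult_right_mono) (auto simp: sum_nonneg)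
  finally have sq: "c * (norm (y - q))\<^sup>2 \<le> norm (y - q) * M" .
  have "c * norm (y - q) \<le> M"
  proof (cases "norm (y - q) = 0")
    case True
    then show ?thesis
      unfolding M_def by (simp add: sum_nonneg)
  next
    case False
    then have "norm (y - q) * (c * norm (y - q)) \<le> norm (y - q) * M"
      using sq by (simp add: power2_eq_square mult_ac)
    then show ?thesis
      using False by simp
  qed
  then have "norm (y - q) \<le> M / c"
    using c by (simp add: pos_le_divide_eq mult.commute)
  then show ?thesis
    unfolding q_def M_def .
qed

section \<open>Lower semicontinuity via sequences\<close>

lemma locally_bounded_at_subset:
  "(\<And>x. M x \<subseteq> M' x) \<Longrightarrow> locally_bounded_at M' xb \<Longrightarrow> locally_bounded_at M xb"
  unfolding locally_bounded_at_def by (meson order_trans)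

lemma lsc_wrt_if_no_escaping_sequence:
  fixes M :: "'a::metric_space \<Rightarrow> 'b::heine_borel set"
  assumes bounded: "locally_bounded_at M xb"
    and no_escape: "\<And>yb \<delta> xs ws wb. yb \<in> M xb \<Longrightarrow> \<delta> > 0 \<Longrightarrow> xs \<longlonglongrightarrow> xb \<Longrightarrow> ws \<longlonglongrightarrow> wb \<Longrightarrow>
      (\<And>n. ws n \<in> M (xs n)) \<Longrightarrow> (\<And>n. M (xs n) \<inter> ball yb \<delta> = {}) \<Longrightarrow> False"
  shows "lsc_wrt M xb (dom_map M)"
  unfolding lsc_wrt_def
proof (intro allI impI)
  fix W assume W: "open W \<and> M xb \<inter> W \<noteq> {}"
  then obtain yb \<delta> where yb: "yb \<in> M xb" and \<delta>: "\<delta> > 0" "ball yb \<delta> \<subseteq> W"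
    using open_contains_ball by blast
  obtain B V0 where B: "bounded B" and V0: "open V0" "xb \<in> V0" and MB: "\<And>x. x \<in> V0 \<Longrightarrow> M x \<subseteq> B"
    using bounded unfolding locally_bounded_at_def by blast
  show "\<exists>V. open V \<and> xb \<in> V \<and> (\<forall>x\<in>V \<inter> dom_map M. M x \<inter> W \<noteq> {})"
  proof (rule ccontr)
    assume escape: "\<not> ?thesis"
    have "\<exists>x. x \<in> ball xb (1 / Suc n) \<inter> V0 \<and> M x \<noteq> {} \<and> M x \<inter> W = {}" for n
    proof -
      have "open (ball xb (1 / Suc n) \<inter> V0)" "xb \<in> ball xb (1 / Suc n) \<inter> V0"
        using V0 by auto
      then show ?thesis
        using escape unfolding dom_map_def by blast
    qed
    then obtain xs where xs: "\<And>n. xs n \<in> ball xb (1 / Suc n) \<inter> V0" "\<And>n. M (xs n) \<noteq> {}"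
      "\<And>n. M (xs n) \<inter> W = {}"
      by metis
    then have "\<forall>n. \<exists>w. w \<in> M (xs n)"
      by blast
    then obtain ws where ws: "\<And>n. ws n \<in> M (xs n)"
      by metis
    have "range ws \<subseteq> B"
      using ws xs(1) MB by blast
    then obtain s wb where s: "strict_mono s" and wb: "(ws \<circ> s) \<longlonglongrightarrow> wb"
      using bounded_imp_convergent_subsequence[OF bounded_subset[OF B]] by blast
    have "(\<lambda>n. dist (xs n) xb) \<longlonglongrightarrow> 0"
      by (rule LIMSEQ_norm_0) (use xs(1) in \<open>simp add: dist_commute\<close>)
    then have "xs \<longlonglongrightarrow> xb"
      by (subst tendsto_dist_iff)
    show False
    proof (rule no_escape[OF yb \<delta>(1) LIMSEQ_subseq_LIMSEQ[OF \<open>xs \<longlonglongrightarrow> xb\<close> s] wb])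
      show "(ws \<circ> s) n \<in> M ((xs \<circ> s) n)" for n
        using ws by simp
      show "M ((xs \<circ> s) n) \<inter> ball yb \<delta> = {}" for n
        using xs(3) \<delta>(2) by auto
    qed
  qed
qed

section \<open>Convex parametric programs\<close>

lemma grad_y_eqI:
  assumes "(F x has_derivative (\<lambda>w. v \<bullet> w)) (at y)"
  shows "grad_y F x y = v"
  unfolding grad_y_def
proof (rule the_equality)
  fix v' assume "(F x has_derivative (\<lambda>w. v' \<bullet> w)) (at y)"
  from has_derivative_unique[OF this assms] show "v' = v"
    by (simp add: fun_eq_iff vector_eq_rdot)
qed (rule assms)

lemma C1_fun_partial:
  fixes F :: "'a::euclidean_space \<Rightarrow> 'b::euclidean_space \<Rightarrow> real"
  assumes "C1_fun (\<lambda>z. F (fst z) (snd z))"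
  shows has_derivative_grad_y: "(F x has_derivative (\<lambda>w. grad_y F x y \<bullet> w)) (at y)"
    and continuous_on_grad_y: "continuous_on UNIV (\<lambda>z. grad_y F (fst z) (snd z))"
    and continuous_on_uncurried: "continuous_on UNIV (\<lambda>z. F (fst z) (snd z))"
proof -
  obtain D where cont: "continuous_on UNIV D"
    and der: "\<And>z. ((\<lambda>z. F (fst z) (snd z)) has_derivative (\<lambda>v. D z \<bullet> v)) (at z)"
    using assms unfolding C1_fun_def by blast
  have partial: "(F x has_derivative (\<lambda>w. snd (D (x, y)) \<bullet> w)) (at y)" for x y
  proof -
    have "((\<lambda>y. (x, y)) has_derivative (\<lambda>w. (0, w))) (at y)"
      by (auto intro!: derivative_eq_intros)
    from has_derivative_compose[OF this der[of "(x, y)"]] show ?thesis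
      by (simp add: inner_prod_def)
  qed
  then have grad: "grad_y F x y = snd (D (x, y))" for x y
    by (rule grad_y_eqI)
  show "(F x has_derivative (\<lambda>w. grad_y F x y \<bullet> w)) (at y)"
    using partial grad by simp
  show "continuous_on UNIV (\<lambda>z. grad_y F (fst z) (snd z))"
    using grad continuous_on_snd[OF cont] by simp
  show "continuous_on UNIV (\<lambda>z. F (fst z) (snd z))"
    by (intro continuous_at_imp_continuous_on ballI has_derivative_continuous[OF der])
qed

lemma tendsto_uncurried:
  assumes "continuous_on UNIV (\<lambda>z. F (fst z) (snd z))" "xs \<longlonglongrightarrow> x" "ys \<longlonglongrightarrow> y"
  shows "(\<lambda>n. F (xs n) (ys n)) \<longlonglongrightarrow> F x y"
  using continuous_on_tendsto_compose[OF assms(1) tendsto_Pair[OF assms(2,3)]] by simp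

lemma Sol_le:
  assumes "w \<in> Sol f h l p x" "y \<in> Gamma h l p x"
  shows "f x w \<le> f x y"
proof -
  have "phi f h l p x \<le> ereal (f x y)"
    unfolding phi_def using assms(2) by (rule INF_lower)
  moreover have "ereal (f x w) = phi f h l p x"
    using assms(1) unfolding Sol_def by simp
  ultimately have "ereal (f x w) \<le> ereal (f x y)"
    by simp
  then show ?thesis
    by simp
qed

lemma Sol_if_le:
  assumes "y \<in> Gamma h l p x" "w \<in> Sol f h l p x" "f x y \<le> f x w"
  shows "y \<in> Sol f h l p x"
proof -
  have "phi f h l p x \<le> ereal (f x y)"
    unfolding phi_def using assms(1) by (rule INF_lower)
  moreover have "phi f h l p x = ereal (f x w)"
    using assms(2) unfolding Sol_def by simp
  ultimately have "ereal (f x y) = phi f h l p x"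
    using assms(3) by simp
  then show ?thesis
    unfolding Sol_def using assms(1) by simp
qed

locale convex_parametric_program =
  fixes f :: "'a::euclidean_space \<Rightarrow> 'b::euclidean_space \<Rightarrow> real"
    and h :: "nat \<Rightarrow> 'a \<Rightarrow> 'b \<Rightarrow> real"
    and l p :: nat
  assumes l_le_p: "l \<le> p"
    and C1_f: "C1_fun (\<lambda>z. f (fst z) (snd z))"
    and C1_h: "\<forall>i\<in>{1..p}. C1_fun (\<lambda>z. h i (fst z) (snd z))"
    and convex_f: "\<forall>x. convex_on UNIV (f x)"
    and convex_h: "\<forall>x. \<forall>i\<in>{1..l}. convex_on UNIV (h i x)"
    and affine_h: "\<forall>x. \<forall>i\<in>{l+1..p}. \<exists>a b. \<forall>y. h i x y = a \<bullet> y + b"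
begin

abbreviation grad :: "nat \<Rightarrow> 'a \<Rightarrow> 'b \<Rightarrow> 'b" where
  "grad \<equiv> G_y f h"

lemma f_has_derivative: "(f x has_derivative (\<lambda>w. grad 0 x y \<bullet> w)) (at y)"
  using has_derivative_grad_y[OF C1_f] by (simp add: G_y_def)

lemma h_has_derivative: "i \<in> {1..p} \<Longrightarrow> (h i x has_derivative (\<lambda>w. grad i x y \<bullet> w)) (at y)"
  using has_derivative_grad_y[of "h i"] C1_h by (simp add: G_y_def)

lemma continuous_on_grad: "i \<le> p \<Longrightarrow> continuous_on UNIV (\<lambda>z. grad i (fst z) (snd z))"
  using continuous_on_grad_y[OF C1_f] continuous_on_grad_y[of "h i"] C1_h
  by (cases "i = 0") (auto simp: G_y_def)

lemma isCont_grad_fixed_y: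
  assumes "i \<le> p"
  shows "isCont (\<lambda>x. grad i x y) x"
proof -
  have "continuous_on UNIV (\<lambda>x. grad i x y)"
    using continuous_on_compose2[OF continuous_on_grad[OF assms]
        continuous_on_Pair[OF continuous_on_id continuous_on_const]] by simp
  then show ?thesis
    by (simp add: continuous_on_eq_continuous_at)
qed

lemma grad_tendsto:
  assumes "i \<le> p" "xs \<longlonglongrightarrow> x" "ys \<longlonglongrightarrow> y"
  shows "(\<lambda>n. grad i (xs n) (ys n)) \<longlonglongrightarrow> grad i x y"
  using tendsto_uncurried[OF continuous_on_grad[OF assms(1)] assms(2,3)] .

lemma f_tendsto: "xs \<longlonglongrightarrow> x \<Longrightarrow> ys \<longlonglongrightarrow> y \<Longrightarrow> (\<lambda>n. f (xs n) (ys n)) \<longlonglongrightarrow> f x y"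
  by (rule tendsto_uncurried[OF continuous_on_uncurried[OF C1_f]])

lemma h_tendsto:
  assumes "i \<in> {1..p}" "xs \<longlonglongrightarrow> x" "ys \<longlonglongrightarrow> y"
  shows "(\<lambda>n. h i (xs n) (ys n)) \<longlonglongrightarrow> h i x y"
  using tendsto_uncurried[OF continuous_on_uncurried[of "h i"] assms(2,3)] C1_h assms(1) by blast

lemma continuous_on_h: "i \<in> {1..p} \<Longrightarrow> continuous_on UNIV (h i x)"
  by (intro continuous_at_imp_continuous_on ballI has_derivative_continuous[OF h_has_derivative])

lemma eq_constraint_affine:
  assumes "j \<in> {l+1..p}"
  shows "grad j x y = grad j x y'" and "h j x y' = h j x y + grad j x y \<bullet> (y' - y)"
proof -
  obtain a b where ab: "\<And>y. h j x y = a \<bullet> y + b"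
    using affine_h assms by blast
  have "grad j x y = a" for y
  proof -
    have "(h j x has_derivative (\<lambda>w. a \<bullet> w)) (at y)"
      unfolding ab by (auto intro!: derivative_eq_intros)
    then show ?thesis
      using assms by (simp add: G_y_def grad_y_eqI)
  qed
  then show "grad j x y = grad j x y'" and "h j x y' = h j x y + grad j x y \<bullet> (y' - y)"
    using ab by (simp_all add: inner_diff_right)
qed

definition eq_feasible :: "'a \<Rightarrow> 'b set" where
  "eq_feasible x = {y. \<forall>j\<in>{l+1..p}. h j x y = 0}"

lemma closed_eq_feasible: "closed (eq_feasible x)"
proof -
  have "eq_feasible x = (\<Inter>j\<in>{l+1..p}. h j x -` {0})"
    unfolding eq_feasible_def by auto
  then show ?thesis
    using continuous_on_h by (auto intro!: closed_INT closed_vimage)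
qed

lemma eq_feasible_eq_hyperplanes:
  "eq_feasible x = {y. \<forall>j\<in>{l+1..p}. grad j x y0 \<bullet> y = grad j x y0 \<bullet> y0 - h j x y0}"
proof -
  have "h j x y = 0 \<longleftrightarrow> grad j x y0 \<bullet> y = grad j x y0 \<bullet> y0 - h j x y0" if "j \<in> {l+1..p}" for j y
    using eq_constraint_affine(2)[OF that, where y=y0 and y'=y] by (auto simp: inner_diff_right)
  then show ?thesis
    unfolding eq_feasible_def by auto
qed

lemma Gamma_eq: "Gamma h l p x = {y \<in> eq_feasible x. \<forall>i\<in>{1..l}. h i x y \<le> 0}"
  unfolding Gamma_def eq_feasible_def by auto

lemma Gamma_closed_limit:
  assumes "\<And>n. ws n \<in> Gamma h l p (xs n)" "xs \<longlonglongrightarrow> x" "ws \<longlonglongrightarrow> w"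
  shows "w \<in> Gamma h l p x"
proof -
  have lim: "(\<lambda>n. h i (xs n) (ws n)) \<longlonglongrightarrow> h i x w" if "i \<in> {1..p}" for i
    using h_tendsto[OF that assms(2,3)] .
  have "h i x w \<le> 0" if "i \<in> {1..l}" for i
    using that l_le_p assms(1) by (intro tendsto_upperbound[OF lim]) (auto simp: Gamma_def)
  moreover have "h i x w = 0" if i: "i \<in> {l+1..p}" for i
  proof -
    have "(\<lambda>n. h i (xs n) (ws n)) = (\<lambda>n. 0)"
      using assms(1) i by (auto simp: Gamma_def)
    with lim[of i] i have "(\<lambda>n. 0::real) \<longlonglongrightarrow> h i x w"
      by auto
    then show ?thesis
      by (simp add: LIMSEQ_const_iff)
  qed
  ultimately show ?thesis
    unfolding Gamma_def by simp
qed

text \<open>Index \<open>0\<close> measures the objective against the level \<open>c\<close>, as \<open>h\<^sub>0 = f - \<phi>\<close> does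
  with \<open>c = \<phi> x\<close>; the remaining indices are the inequality constraints.\<close>
definition resid :: "real \<Rightarrow> 'a \<Rightarrow> nat \<Rightarrow> 'b \<Rightarrow> real" where
  "resid c x i y = (if i = 0 then f x y - c else h i x y)"

lemma resid_has_derivative:
  "i \<le> l \<Longrightarrow> (resid c x i has_derivative (\<lambda>w. grad i x y \<bullet> w)) (at y)"
  using f_has_derivative h_has_derivative l_le_p unfolding resid_def
  by (cases "i = 0") (auto intro!: derivative_eq_intros)

lemma continuous_on_resid: "i \<le> l \<Longrightarrow> continuous_on UNIV (resid c x i)"
  by (intro continuous_at_imp_continuous_on ballI has_derivative_continuous[OF resid_has_derivative])

lemma convex_on_resid:
  assumes "i \<le> l"
  shows "convex_on UNIV (resid c x i)"
proof (cases "i = 0")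
  case True
  have "convex_on UNIV (\<lambda>y. f x y + - c)"
    using convex_f by (intro convex_on_add) (auto simp: convex_on_const)
  then show ?thesis
    using True unfolding resid_def by simp
next
  case False
  then show ?thesis
    using convex_h assms unfolding resid_def by simp
qed

lemma resid_tendsto:
  assumes "i \<le> l" "cs \<longlonglongrightarrow> c" "xs \<longlonglongrightarrow> x" "ys \<longlonglongrightarrow> y"
  shows "(\<lambda>n. resid (cs n) (xs n) i (ys n)) \<longlonglongrightarrow> resid c x i y"
proof (cases "i = 0")
  case True
  have "(\<lambda>n. f (xs n) (ys n) - cs n) \<longlonglongrightarrow> f x y - c"
    by (rule tendsto_diff[OF f_tendsto[OF assms(3,4)] assms(2)])
  then show ?thesis
    using True unfolding resid_def by simp
next
  case False
  then have "i \<in> {1..p}"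
    using assms(1) l_le_p by auto
  from h_tendsto[OF this assms(3,4)] show ?thesis
    using False unfolding resid_def by simp
qed

lemma Sol_if_infeasibility_eq_0:
  assumes w: "w \<in> Sol f h l p x" and y: "y \<in> eq_feasible x"
    and "infeasibility (resid (f x w) x) {0..l} y = 0"
  shows "y \<in> Sol f h l p x"
proof -
  have le0: "\<forall>i\<in>{0..l}. resid (f x w) x i y \<le> 0"
    using assms(3) by (simp add: infeasibility_eq_0_iff)
  have "h i x y \<le> 0" if "i \<in> {1..l}" for i
  proof -
    have "resid (f x w) x i y \<le> 0"
      using le0 that by auto
    then show ?thesis
      using that by (simp add: resid_def)
  qed
  then have "y \<in> Gamma h l p x"
    using y unfolding Gamma_eq by simp
  moreover have "resid (f x w) x 0 y \<le> 0"
    using le0 by simp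
  then have "f x y \<le> f x w"
    by (simp add: resid_def)
  ultimately show ?thesis
    by (rule Sol_if_le[OF _ w])
qed

text \<open>Convexity bounds the violation at \<open>z\<close> by the directional derivatives towards the
  point \<open>w\<close> satisfying all the constraints, and these cancel in the combination.\<close>
lemma positive_gradient_combination_ne_0:
  assumes K: "K \<subseteq> {0..l}" "K \<noteq> {}" and T: "T \<subseteq> {l+1..p}"
    and z: "z \<in> eq_feasible x" and w: "w \<in> eq_feasible x"
    and w_feasible: "\<forall>i\<in>K. resid c x i w \<le> 0" and z_violated: "\<forall>i\<in>K. resid c x i z > 0"
    and \<mu>: "\<forall>i\<in>K. \<mu> i > 0"
  shows "(\<Sum>i\<in>K \<union> T. \<mu> i *\<^sub>R grad i x z) \<noteq> 0"
proof
  assume sum0: "(\<Sum>i\<in>K \<union> T. \<mu> i *\<^sub>R grad i x z) = 0"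
  have finite: "finite K" "finite T"
    using K T finite_subset by auto
  have KT: "K \<inter> T = {}"
  proof (intro equals0I)
    fix i assume "i \<in> K \<inter> T"
    then have "i \<le> l" "l + 1 \<le> i"
      using K(1) T by auto
    then show False
      by simp
  qed
  have "grad t x z \<bullet> (w - z) = 0" if "t \<in> T" for t
    using eq_constraint_affine(2)[of t x w z] that T z w unfolding eq_feasible_def by auto
  then have "(\<Sum>i\<in>K. \<mu> i * (grad i x z \<bullet> (w - z))) = 0"
    using arg_cong[OF sum0, of "\<lambda>v. v \<bullet> (w - z)"] finite KT
    by (simp add: inner_sum_left inner_add_left sum.union_disjoint)
  moreover have "\<mu> i * resid c x i z + \<mu> i * (grad i x z \<bullet> (w - z)) \<le> 0" if "i \<in> K" for i
  proof -
    have "resid c x i z + grad i x z \<bullet> (w - z) \<le> resid c x i w"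
      using that K convex_on_tangent_le[OF convex_on_resid resid_has_derivative] by auto
    then show ?thesis
      using that w_feasible \<mu> by (smt (verit) distrib_left mult_le_0_iff)
  qed
  then have "(\<Sum>i\<in>K. \<mu> i * resid c x i z) + (\<Sum>i\<in>K. \<mu> i * (grad i x z \<bullet> (w - z))) \<le> 0"
    by (simp add: sum_nonpos flip: sum.distrib)
  moreover have "(\<Sum>i\<in>K. \<mu> i * resid c x i z) > 0"
    using finite(1) K(2) \<mu> z_violated by (intro sum_pos) auto
  ultimately show False
    by simp
qed

end

section \<open>A sequence violating lower semicontinuity\<close>

locale lsc_failure = convex_parametric_program f h l p
  for f :: "'a::euclidean_space \<Rightarrow> 'b::euclidean_space \<Rightarrow> real" and h l p +
  fixes xb :: 'a and yb :: 'b and xs :: "nat \<Rightarrow> 'a" and ws :: "nat \<Rightarrow> 'b" and wb :: 'b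
    and \<delta> :: real and U :: "('a \<times> 'b) set" and T :: "nat set"
  assumes yb_Sol: "yb \<in> Sol f h l p xb"
    and xs_lim: "xs \<longlonglongrightarrow> xb" and ws_lim: "ws \<longlonglongrightarrow> wb" and ws_Sol: "\<And>n. ws n \<in> Sol f h l p (xs n)"
    and \<delta>_pos: "\<delta> > 0" and far: "\<And>n. Sol f h l p (xs n) \<inter> ball yb \<delta> = {}"
    and U: "open U" "(xb, yb) \<in> U"
    and T_sub: "T \<subseteq> {l+1..p}"
    and T_indep: "\<not> fam_lin_dep (\<lambda>i. G_y f h i xb yb) T"
    and T_span: "span ((\<lambda>i. G_y f h i xb yb) ` T) = span ((\<lambda>i. G_y f h i xb yb) ` {l+1..p})"
    and const_rank: "\<exists>r. \<forall>(x, y) \<in> U \<inter> (dom_map (Gamma h l p) \<times> UNIV).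
      dim ((\<lambda>i. G_y f h i x y) ` {l+1..p}) = r"
    and rcpld: "\<And>K. K \<subseteq> {0} \<union> {i\<in>{1..l}. h i xb yb = 0} \<Longrightarrow>
      pos_lin_dep (\<lambda>i. G_y f h i xb yb) K (\<lambda>i. G_y f h i xb yb) T \<Longrightarrow>
      \<forall>(x, y) \<in> U \<inter> (dom_map (Gamma h l p) \<times> UNIV). fam_lin_dep (\<lambda>i. G_y f h i x y) (K \<union> T)"
begin

lemma finite_T: "finite T"
  using T_sub finite_subset by blast

lemma ws_Gamma: "ws n \<in> Gamma h l p (xs n)"
  using ws_Sol unfolding Sol_def by blast

lemma ws_eq_feasible: "ws n \<in> eq_feasible (xs n)"
  using ws_Gamma unfolding Gamma_eq by blast

lemma yb_Gamma: "yb \<in> Gamma h l p xb"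
  using yb_Sol unfolding Sol_def by blast

lemma f_yb_le_wb: "f xb yb \<le> f xb wb"
  using Sol_le[OF yb_Sol Gamma_closed_limit[OF ws_Gamma xs_lim ws_lim]] .

lemma eventually_lin_indep_bound_T:
  obtains c where "c > 0" "\<forall>\<^sub>F n in sequentially. lin_indep_bound c (\<lambda>t. grad t (xs n) yb) T \<and>
    span ((\<lambda>t. grad t (xs n) yb) ` T) = span ((\<lambda>t. grad t (xs n) yb) ` {l+1..p})"
proof -
  have "\<forall>t\<in>T. isCont (\<lambda>x. grad t x yb) xb"
  proof
    fix t assume "t \<in> T"
    then have "t \<le> p"
      using T_sub by auto
    then show "isCont (\<lambda>x. grad t x yb) xb"
      by (rule isCont_grad_fixed_y)
  qed
  then obtain c where c: "c > 0" and near: "\<forall>\<^sub>F x in nhds xb. lin_indep_bound c (\<lambda>t. grad t x yb) T"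
    using eventually_lin_indep_bound[where v="\<lambda>t x. grad t x yb", OF finite_T _ T_indep]
    by blast
  from eventually_compose_filterlim[OF near xs_lim]
  have bound: "\<forall>\<^sub>F n in sequentially. lin_indep_bound c (\<lambda>t. grad t (xs n) yb) T" .
  obtain r where r: "\<And>x y. (x, y) \<in> U \<Longrightarrow> x \<in> dom_map (Gamma h l p) \<Longrightarrow>
      dim ((\<lambda>i. grad i x y) ` {l+1..p}) = r"
    using const_rank by blast
  have xs_dom: "xs n \<in> dom_map (Gamma h l p)" for n
    using ws_Gamma unfolding dom_map_def by blast
  have "r = card T"
    using r[OF U(2)] yb_Gamma span_eq_dim[OF T_span] dim_image_if_not_fam_lin_dep[OF finite_T T_indep]
    unfolding dom_map_def by auto
  have "\<forall>\<^sub>F n in sequentially. (xs n, yb) \<in> U"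
    using tendsto_Pair[OF xs_lim tendsto_const] U by (rule topological_tendstoD)
  then have "\<forall>\<^sub>F n in sequentially. lin_indep_bound c (\<lambda>t. grad t (xs n) yb) T \<and>
    span ((\<lambda>t. grad t (xs n) yb) ` T) = span ((\<lambda>t. grad t (xs n) yb) ` {l+1..p})"
    using bound
  proof eventually_elim
    case (elim n)
    then have "dim ((\<lambda>t. grad t (xs n) yb) ` T) = r"
      using dim_image_if_not_fam_lin_dep[OF finite_T not_fam_lin_dep_if_lin_indep_bound[OF c _ finite_T]]
        \<open>r = card T\<close> by simp
    then have "span ((\<lambda>t. grad t (xs n) yb) ` T) = span ((\<lambda>t. grad t (xs n) yb) ` {l+1..p})"
      using r[OF elim(1) xs_dom] T_sub by (intro dim_eq_span) auto
    then show ?case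
      using elim(2) by blast
  qed
  then show thesis
    using c that by blast
qed

definition q :: "nat \<Rightarrow> 'b" where
  "q n = closest_point (eq_feasible (xs n)) yb"

lemma q_eq_feasible: "q n \<in> eq_feasible (xs n)"
  unfolding q_def using closest_point_in_set[OF closed_eq_feasible] ws_eq_feasible by blast

lemma q_tendsto: "q \<longlonglongrightarrow> yb"
proof -
  obtain c where c: "c > 0" and ev: "\<forall>\<^sub>F n in sequentially. lin_indep_bound c (\<lambda>t. grad t (xs n) yb) T \<and>
    span ((\<lambda>t. grad t (xs n) yb) ` T) = span ((\<lambda>t. grad t (xs n) yb) ` {l+1..p})"
    by (rule eventually_lin_indep_bound_T)
  have "\<forall>\<^sub>F n in sequentially. norm (q n - yb) \<le> (\<Sum>t\<in>T. \<bar>h t (xs n) yb\<bar>) / c"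
    using ev
  proof eventually_elim
    case (elim n)
    define a where "a t = grad t (xs n) yb" for t
    define b where "b t = grad t (xs n) yb \<bullet> yb - h t (xs n) yb" for t
    have "eq_feasible (xs n) = {y. \<forall>j\<in>{l+1..p}. a j \<bullet> y = b j}"
      unfolding a_def b_def by (rule eq_feasible_eq_hyperplanes)
    also have "\<dots> = {y. \<forall>t\<in>T. a t \<bullet> y = b t}"
      using elim T_sub ws_eq_feasible[of n] \<open>eq_feasible (xs n) = _\<close>
      unfolding a_def by (intro affine_constraints_eq_if_span_eq) auto
    finally have "norm (yb - q n) \<le> (\<Sum>t\<in>T. \<bar>a t \<bullet> yb - b t\<bar>) / c"
      unfolding q_def using elim c finite_T ws_eq_feasible[of n]
      by (intro norm_closest_point_affine_le) (auto simp: a_def)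
    then show ?case
      by (simp add: a_def b_def norm_minus_commute)
  qed
  moreover have "(\<lambda>n. (\<Sum>t\<in>T. \<bar>h t (xs n) yb\<bar>) / c) \<longlonglongrightarrow> (\<Sum>t\<in>T. \<bar>h t xb yb\<bar>) / c"
    using T_sub c by (intro tendsto_intros h_tendsto xs_lim) auto
  moreover have "(\<Sum>t\<in>T. \<bar>h t xb yb\<bar>) = 0"
    using yb_Gamma T_sub unfolding Gamma_def by (intro sum.neutral) auto
  ultimately have "(\<lambda>n. q n - yb) \<longlonglongrightarrow> 0"
    by (auto intro: Lim_null_comparison)
  then show ?thesis
    by (simp add: LIM_zero_iff)
qed

definition R :: "nat \<Rightarrow> 'b \<Rightarrow> real" where
  "R n = infeasibility (resid (f (xs n) (ws n)) (xs n)) {0..l}"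

definition \<rho> :: "nat \<Rightarrow> real" where
  "\<rho> n = sqrt (R n (q n))"

abbreviation near_q :: "nat \<Rightarrow> 'b set" where
  "near_q n \<equiv> cball (q n) (\<rho> n) \<inter> eq_feasible (xs n)"

text \<open>Ekeland-type perturbation: minimising the infeasibility plus \<open>2 \<rho> n\<close> times the distance
  to \<open>q n\<close> gives a nearby point at which the infeasibility cannot decrease faster than at
  rate \<open>2 \<rho> n \<rightarrow> 0\<close> along the equality constraints.\<close>
definition z :: "nat \<Rightarrow> 'b" where
  "z n = (SOME y. y \<in> near_q n \<and>
    (\<forall>y'\<in>near_q n. R n y + 2 * \<rho> n * norm (y - q n) \<le> R n y' + 2 * \<rho> n * norm (y' - q n)))"

lemma continuous_on_R: "continuous_on UNIV (R n)"
  unfolding R_def by (intro continuous_on_infeasibility continuous_on_resid) auto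

lemma R_nonneg: "R n y \<ge> 0"
  unfolding R_def by (rule infeasibility_nonneg)

lemma q_near_q: "q n \<in> near_q n"
  using q_eq_feasible R_nonneg by (simp add: \<rho>_def)

lemma z_minimal:
  "z n \<in> near_q n \<and>
    (\<forall>y\<in>near_q n. R n (z n) + 2 * \<rho> n * norm (z n - q n) \<le> R n y + 2 * \<rho> n * norm (y - q n))"
proof -
  have "compact (near_q n)"
    by (intro compact_Int_closed compact_cball closed_eq_feasible)
  moreover have "near_q n \<noteq> {}"
    using q_near_q by blast
  moreover have "continuous_on (near_q n) (\<lambda>y. R n y + 2 * \<rho> n * norm (y - q n))"
    by (intro continuous_intros continuous_on_subset[OF continuous_on_R]) auto
  ultimately have "\<exists>y\<in>near_q n. \<forall>y'\<in>near_q n.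
      R n y + 2 * \<rho> n * norm (y - q n) \<le> R n y' + 2 * \<rho> n * norm (y' - q n)"
    by (rule continuous_attains_inf)
  then show ?thesis
    unfolding z_def by (rule someI2_bex) blast
qed

lemma z_eq_feasible: "z n \<in> eq_feasible (xs n)"
  using z_minimal by blast

lemma norm_z_q_le: "norm (z n - q n) \<le> \<rho> n / 2"
proof (cases "\<rho> n = 0")
  case True
  then show ?thesis
    using z_minimal[of n] by (simp add: dist_norm norm_minus_commute)
next
  case False
  then have "\<rho> n > 0"
    unfolding \<rho>_def using R_nonneg by (simp add: order_less_le)
  have "R n (z n) + 2 * \<rho> n * norm (z n - q n) \<le> R n (q n) + 2 * \<rho> n * norm (q n - q n)"
    using z_minimal[of n] q_near_q[of n] by blast
  also have "\<dots> = R n (q n)"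
    by simp
  also have "R n (q n) = \<rho> n * \<rho> n"
    unfolding \<rho>_def using R_nonneg by simp
  finally have "\<rho> n * (2 * norm (z n - q n)) \<le> \<rho> n * \<rho> n"
    using R_nonneg[of n "z n"] by (simp add: algebra_simps)
  then show ?thesis
    using \<open>\<rho> n > 0\<close> by simp
qed

lemma R_q_tendsto: "(\<lambda>n. R n (q n)) \<longlonglongrightarrow> 0"
proof -
  have "(\<lambda>n. resid (f (xs n) (ws n)) (xs n) i (q n)) \<longlonglongrightarrow> resid (f xb wb) xb i yb" if "i \<in> {0..l}" for i
    using that by (intro resid_tendsto f_tendsto xs_lim ws_lim q_tendsto) auto
  then have "(\<lambda>n. R n (q n)) \<longlonglongrightarrow> infeasibility (resid (f xb wb) xb) {0..l} yb"
    unfolding R_def infeasibility_def by (intro tendsto_intros) auto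
  moreover have "resid (f xb wb) xb i yb \<le> 0" if "i \<in> {0..l}" for i
    using that f_yb_le_wb yb_Gamma unfolding resid_def Gamma_def by auto
  then have "infeasibility (resid (f xb wb) xb) {0..l} yb = 0"
    by (simp add: infeasibility_eq_0_iff)
  ultimately show ?thesis
    by simp
qed

lemma \<rho>_tendsto: "\<rho> \<longlonglongrightarrow> 0"
  unfolding \<rho>_def using tendsto_real_sqrt[OF R_q_tendsto] by simp

lemma z_tendsto: "z \<longlonglongrightarrow> yb"
proof -
  have "(\<lambda>n. \<rho> n / 2) \<longlonglongrightarrow> 0"
    using tendsto_divide[OF \<rho>_tendsto tendsto_const[of 2]] by simp
  moreover have "\<forall>\<^sub>F n in sequentially. norm (z n - q n) \<le> \<rho> n / 2"
    using norm_z_q_le by simp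
  ultimately have "(\<lambda>n. z n - q n) \<longlonglongrightarrow> 0"
    by (rule Lim_null_comparison[rotated])
  from tendsto_add[OF this q_tendsto] show ?thesis
    by simp
qed

lemma eventually_violated: "\<forall>\<^sub>F n in sequentially. R n (q n) > 0 \<and> R n (z n) > 0"
proof -
  have pos: "R n y > 0" if "y \<in> eq_feasible (xs n)" "dist y yb < \<delta>" for n y
  proof (rule ccontr)
    assume "\<not> R n y > 0"
    then have "R n y = 0"
      using R_nonneg[of n y] by simp
    then have "y \<in> Sol f h l p (xs n)"
      using Sol_if_infeasibility_eq_0[OF ws_Sol that(1)] unfolding R_def by blast
    then show False
      using far[of n] that(2) by (auto simp: dist_commute)
  qed
  have "\<forall>\<^sub>F n in sequentially. dist (q n) yb < \<delta>" "\<forall>\<^sub>F n in sequentially. dist (z n) yb < \<delta>"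
    using q_tendsto z_tendsto \<delta>_pos by (auto intro: tendstoD)
  then show ?thesis
    by eventually_elim (use pos q_eq_feasible z_eq_feasible in blast)
qed

definition u :: "nat \<Rightarrow> nat \<Rightarrow> real" where
  "u n i = max (resid (f (xs n) (ws n)) (xs n) i (z n)) 0 / R n (z n)"

definition \<gamma> :: "nat \<Rightarrow> 'b" where
  "\<gamma> n = (\<Sum>i\<in>{0..l}. u n i *\<^sub>R grad i (xs n) (z n))"

lemma u_nonneg: "u n i \<ge> 0"
  unfolding u_def using R_nonneg by simp

lemma resid_pos_if_u_pos: "u n i > 0 \<Longrightarrow> resid (f (xs n) (ws n)) (xs n) i (z n) > 0"
  unfolding u_def by (auto simp: max_def split: if_splits)

lemma sum_u_sq:
  assumes "R n (z n) > 0"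
  shows "(\<Sum>i\<in>{0..l}. (u n i)\<^sup>2) = 1"
proof -
  have "(\<Sum>i\<in>{0..l}. (u n i)\<^sup>2)
      = (\<Sum>i\<in>{0..l}. (max (resid (f (xs n) (ws n)) (xs n) i (z n)) 0)\<^sup>2) / (R n (z n))\<^sup>2"
    unfolding u_def by (simp add: power_divide sum_divide_distrib)
  also have "\<dots> = 1"
    using assms unfolding R_def by (simp flip: infeasibility_sq)
  finally show ?thesis .
qed

lemma u_le_1:
  assumes "R n (z n) > 0" "i \<in> {0..l}"
  shows "u n i \<le> 1"
proof -
  have "(u n i)\<^sup>2 \<le> (\<Sum>i\<in>{0..l}. (u n i)\<^sup>2)"
    using assms(2) by (intro member_le_sum) auto
  then have "(u n i)\<^sup>2 \<le> 1\<^sup>2"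
    using sum_u_sq[OF assms(1)] by simp
  then show ?thesis
    by (rule power2_le_imp_le) simp
qed

lemma approx_normal:
  assumes q_pos: "R n (q n) > 0" and z_pos: "R n (z n) > 0"
    and d: "\<forall>j\<in>{l+1..p}. grad j (xs n) yb \<bullet> d = 0"
  shows "- (2 * \<rho> n * norm d) \<le> \<gamma> n \<bullet> d"
proof -
  have \<rho>_pos: "\<rho> n > 0"
    using q_pos by (simp add: \<rho>_def)
  define t0 where "t0 = (\<rho> n / 2) / (norm d + 1)"
  have "norm d + 1 > 0"
    by (rule add_nonneg_pos) simp_all
  then have "t0 > 0" and t0: "t0 * (norm d + 1) = \<rho> n / 2"
    unfolding t0_def using \<rho>_pos by (simp_all add: field_simps)
  have decrease: "R n (z n) - 2 * \<rho> n * t * norm d \<le> R n (z n + t *\<^sub>R d)" if t: "0 < t" "t < t0" for t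
  proof -
    have "h j (xs n) (z n + t *\<^sub>R d) = 0" if "j \<in> {l+1..p}" for j
      using eq_constraint_affine(1)[OF that, where x="xs n" and y="z n" and y'=yb]
        eq_constraint_affine(2)[OF that, where x="xs n" and y="z n" and y'="z n + t *\<^sub>R d"]
        z_eq_feasible[of n] d that unfolding eq_feasible_def by simp
    then have "z n + t *\<^sub>R d \<in> eq_feasible (xs n)"
      unfolding eq_feasible_def by simp
    moreover have "t * norm d \<le> \<rho> n / 2"
    proof -
      have "t * norm d \<le> t0 * (norm d + 1)"
        using t by (intro mult_mono) auto
      then show ?thesis
        unfolding t0 .
    qed
    then have norm_le: "norm (z n + t *\<^sub>R d - q n) \<le> norm (z n - q n) + t * norm d"
      using norm_triangle_ineq[of "z n - q n" "t *\<^sub>R d"] t by (simp add: algebra_simps)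
    then have "dist (q n) (z n + t *\<^sub>R d) \<le> \<rho> n"
      using norm_z_q_le[of n] \<open>t * norm d \<le> \<rho> n / 2\<close> by (simp add: dist_norm norm_minus_commute)
    ultimately have "z n + t *\<^sub>R d \<in> near_q n"
      by simp
    then have "R n (z n) + 2 * \<rho> n * norm (z n - q n)
        \<le> R n (z n + t *\<^sub>R d) + 2 * \<rho> n * norm (z n + t *\<^sub>R d - q n)"
      using z_minimal by blast
    also have "\<dots> \<le> R n (z n + t *\<^sub>R d) + 2 * \<rho> n * (norm (z n - q n) + t * norm d)"
      using norm_le \<rho>_pos by simp
    finally show ?thesis
      by (simp add: algebra_simps)
  qed
  have "- (2 * \<rho> n * R n (z n) * norm d)
      \<le> (\<Sum>i\<in>{0..l}. max (resid (f (xs n) (ws n)) (xs n) i (z n)) 0 * (grad i (xs n) (z n) \<bullet> d))"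
    using infeasibility_directional_bound[of "{0..l}" "resid (f (xs n) (ws n)) (xs n)"
        "\<lambda>i w. grad i (xs n) (z n) \<bullet> w" "z n" "2 * \<rho> n" t0 d]
      resid_has_derivative \<rho>_pos \<open>t0 > 0\<close> decrease
    unfolding R_def by auto
  also have "\<dots> = R n (z n) * (\<gamma> n \<bullet> d)"
    unfolding \<gamma>_def u_def using z_pos by (simp add: inner_sum_left sum_distrib_left)
  finally have "R n (z n) * (- (2 * \<rho> n * norm d)) \<le> R n (z n) * (\<gamma> n \<bullet> d)"
    by (simp add: algebra_simps)
  then show ?thesis
    by (rule mult_left_le_imp_le[OF _ z_pos])
qed

lemma eventually_norm_grad_le:
  "\<forall>\<^sub>F n in sequentially. \<forall>i\<in>{0..l}. norm (grad i (xs n) (z n)) \<le> norm (grad i xb yb) + 1"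
proof (rule eventually_ball_finite, simp, rule ballI)
  fix i assume "i \<in> {0..l}"
  then have "(\<lambda>n. norm (grad i (xs n) (z n))) \<longlonglongrightarrow> norm (grad i xb yb)"
    using l_le_p by (intro tendsto_norm grad_tendsto xs_lim z_tendsto) auto
  then have "\<forall>\<^sub>F n in sequentially. norm (grad i (xs n) (z n)) < norm (grad i xb yb) + 1"
    by (rule order_tendstoD) simp
  then show "\<forall>\<^sub>F n in sequentially. norm (grad i (xs n) (z n)) \<le> norm (grad i xb yb) + 1"
    by eventually_elim simp
qed

text \<open>The multipliers \<open>u n\<close> lie on the unit sphere, and the coefficients of the equality
  gradients approximating \<open>\<gamma> n\<close> stay bounded by uniform independence; their joint limit is
  the dependence.\<close>
lemma limiting_pos_lin_dep:
  obtains sb V where "strict_mono sb" "V \<subseteq> {0..l}" "\<forall>i\<in>V. \<forall>\<^sub>F m in sequentially. u (sb m) i > 0"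
    "pos_lin_dep (\<lambda>i. grad i xb yb) V (\<lambda>i. grad i xb yb) T"
proof -
  obtain c where c: "c > 0" and ev_T: "\<forall>\<^sub>F n in sequentially. lin_indep_bound c (\<lambda>t. grad t (xs n) yb) T \<and>
    span ((\<lambda>t. grad t (xs n) yb) ` T) = span ((\<lambda>t. grad t (xs n) yb) ` {l+1..p})"
    by (rule eventually_lin_indep_bound_T)
  define B where "B = (\<Sum>i\<in>{0..l}. norm (grad i xb yb) + 1)"
  have "\<forall>\<^sub>F n in sequentially. 2 * \<rho> n < 1"
    using tendsto_mult_right_zero[OF \<rho>_tendsto, of 2] by (rule order_tendstoD) simp
  define good where "good n \<longleftrightarrow> (R n (q n) > 0 \<and> R n (z n) > 0) \<and>
      (lin_indep_bound c (\<lambda>t. grad t (xs n) yb) T \<and>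
        span ((\<lambda>t. grad t (xs n) yb) ` T) = span ((\<lambda>t. grad t (xs n) yb) ` {l+1..p})) \<and>
      (\<forall>i\<in>{0..l}. norm (grad i (xs n) (z n)) \<le> norm (grad i xb yb) + 1) \<and> 2 * \<rho> n < 1" for n
  have ev_good: "\<forall>\<^sub>F n in sequentially. good n"
    using eventually_violated ev_T eventually_norm_grad_le \<open>\<forall>\<^sub>F n in sequentially. 2 * \<rho> n < 1\<close>
    unfolding good_def by eventually_elim blast
  have "\<exists>\<mu>. norm (\<gamma> n - (\<Sum>t\<in>T. \<mu> t *\<^sub>R grad t (xs n) yb)) \<le> 2 * \<rho> n \<and> (\<Sum>t\<in>T. \<bar>\<mu> t\<bar>) \<le> (B + 1) / c"
    if "good n" for n
  proof -
    note good = that[unfolded good_def]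
    have "norm (\<gamma> n) \<le> (\<Sum>i\<in>{0..l}. norm (u n i *\<^sub>R grad i (xs n) (z n)))"
      unfolding \<gamma>_def by (rule norm_sum)
    also have "\<dots> \<le> B"
      unfolding B_def
    proof (rule sum_mono)
      fix i assume i: "i \<in> {0..l}"
      have "norm (u n i *\<^sub>R grad i (xs n) (z n)) = u n i * norm (grad i (xs n) (z n))"
        using u_nonneg by simp
      also have "\<dots> \<le> 1 * (norm (grad i xb yb) + 1)"
        using good i u_le_1[of n i] u_nonneg by (intro mult_mono) auto
      finally show "norm (u n i *\<^sub>R grad i (xs n) (z n)) \<le> norm (grad i xb yb) + 1"
        by simp
    qed
    finally have \<gamma>_le: "norm (\<gamma> n) \<le> B" .
    obtain s where s: "s \<in> span ((\<lambda>j. grad j (xs n) yb) ` {l+1..p})" "norm (\<gamma> n - s) \<le> 2 * \<rho> n"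
      using near_span_if_approx_normal[of "2 * \<rho> n" "(\<lambda>j. grad j (xs n) yb) ` {l+1..p}" "\<gamma> n"]
        approx_normal[of n] good \<rho>_def by auto
    have "\<not> fam_lin_dep (\<lambda>t. grad t (xs n) yb) T"
      using good c finite_T by (intro not_fam_lin_dep_if_lin_indep_bound) auto
    then obtain \<mu> where \<mu>: "s = (\<Sum>t\<in>T. \<mu> t *\<^sub>R grad t (xs n) yb)"
      using span_image_sum_repr[OF finite_T inj_on_if_not_fam_lin_dep[OF finite_T]] s(1) good by metis
    have "c * (\<Sum>t\<in>T. \<bar>\<mu> t\<bar>) \<le> norm s"
      using good \<mu> unfolding lin_indep_bound_def by auto
    also have "\<dots> \<le> norm (\<gamma> n) + norm (\<gamma> n - s)"
      using norm_triangle_sub[of s "\<gamma> n"] by (simp add: norm_minus_commute)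
    also have "\<dots> \<le> B + 1"
      using \<gamma>_le s(2) good by simp
    finally have "(\<Sum>t\<in>T. \<bar>\<mu> t\<bar>) \<le> (B + 1) / c"
      using c by (simp add: pos_le_divide_eq mult.commute)
    then show ?thesis
      using s(2) \<mu> by blast
  qed
  then obtain \<mu> where \<mu>: "\<And>n. good n \<Longrightarrow> norm (\<gamma> n - (\<Sum>t\<in>T. \<mu> n t *\<^sub>R grad t (xs n) yb)) \<le> 2 * \<rho> n"
    "\<And>n. good n \<Longrightarrow> (\<Sum>t\<in>T. \<bar>\<mu> n t\<bar>) \<le> (B + 1) / c"
    by metis
  have "B \<ge> 0"
    unfolding B_def by (simp add: sum_nonneg)
  define cc where "cc n i = (if i \<le> l then u n i else \<mu> n i)" for n i
  have "\<forall>\<^sub>F n in sequentially. \<forall>i\<in>{0..l} \<union> T. \<bar>cc n i\<bar> \<le> 1 + (B + 1) / c"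
    using ev_good
  proof eventually_elim
    case (elim n)
    show ?case
    proof
      fix i assume i: "i \<in> {0..l} \<union> T"
      have "(B + 1) / c \<ge> 0"
        using \<open>B \<ge> 0\<close> c by simp
      show "\<bar>cc n i\<bar> \<le> 1 + (B + 1) / c"
      proof (cases "i \<le> l")
        case True
        then show ?thesis
          using elim u_le_1[of n i] u_nonneg[of n i] \<open>(B + 1) / c \<ge> 0\<close> unfolding good_def cc_def by auto
      next
        case False
        then have "i \<in> T"
          using i by auto
        then have "\<bar>\<mu> n i\<bar> \<le> (\<Sum>t\<in>T. \<bar>\<mu> n t\<bar>)"
          using finite_T by (intro member_le_sum) auto
        then show ?thesis
          using \<mu>(2)[OF elim] False unfolding cc_def by simp
      qed
    qed
  qed
  then obtain sb L where sb: "strict_mono sb" and L: "\<forall>i\<in>{0..l} \<union> T. (\<lambda>m. cc (sb m) i) \<longlonglongrightarrow> L i"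
    using finite_family_convergent_subseq[of "{0..l} \<union> T"] finite_T by blast
  have u_lim: "(\<lambda>m. u (sb m) i) \<longlonglongrightarrow> L i" if "i \<in> {0..l}" for i
    using bspec[OF L, of i] that unfolding cc_def by simp
  have \<mu>_lim: "(\<lambda>m. \<mu> (sb m) t) \<longlonglongrightarrow> L t" if "t \<in> T" for t
  proof -
    have "\<not> t \<le> l"
      using that T_sub by auto
    then show ?thesis
      using bspec[OF L, of t] that unfolding cc_def by simp
  qed
  have xs_sb: "(\<lambda>m. xs (sb m)) \<longlonglongrightarrow> xb" and z_sb: "(\<lambda>m. z (sb m)) \<longlonglongrightarrow> yb"
    and \<rho>_sb: "(\<lambda>m. 2 * \<rho> (sb m)) \<longlonglongrightarrow> 0"
    using LIMSEQ_subseq_LIMSEQ[OF xs_lim sb] LIMSEQ_subseq_LIMSEQ[OF z_tendsto sb]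
      LIMSEQ_subseq_LIMSEQ[OF tendsto_mult_right_zero[OF \<rho>_tendsto, of 2] sb]
    by (simp_all add: o_def)
  have good_sb: "\<forall>\<^sub>F m in sequentially. good (sb m)"
    using eventually_subseq[OF sb ev_good] .
  have lim_\<gamma>: "(\<lambda>m. \<gamma> (sb m)) \<longlonglongrightarrow> (\<Sum>i\<in>{0..l}. L i *\<^sub>R grad i xb yb)"
    unfolding \<gamma>_def
  proof (intro tendsto_sum tendsto_scaleR)
    fix i assume "i \<in> {0..l}"
    then show "(\<lambda>m. u (sb m) i) \<longlonglongrightarrow> L i" "(\<lambda>m. grad i (xs (sb m)) (z (sb m))) \<longlonglongrightarrow> grad i xb yb"
      using u_lim l_le_p grad_tendsto[OF _ xs_sb z_sb, of i] by auto
  qed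
  have lim_T: "(\<lambda>m. \<Sum>t\<in>T. \<mu> (sb m) t *\<^sub>R grad t (xs (sb m)) yb) \<longlonglongrightarrow> (\<Sum>t\<in>T. L t *\<^sub>R grad t xb yb)"
  proof (intro tendsto_sum tendsto_scaleR)
    fix t assume "t \<in> T"
    then show "(\<lambda>m. \<mu> (sb m) t) \<longlonglongrightarrow> L t" "(\<lambda>m. grad t (xs (sb m)) yb) \<longlonglongrightarrow> grad t xb yb"
      using \<mu>_lim T_sub grad_tendsto[OF _ xs_sb tendsto_const, of t] by auto
  qed
  have "(\<lambda>m. \<gamma> (sb m) - (\<Sum>t\<in>T. \<mu> (sb m) t *\<^sub>R grad t (xs (sb m)) yb))
      \<longlonglongrightarrow> (\<Sum>i\<in>{0..l}. L i *\<^sub>R grad i xb yb) - (\<Sum>t\<in>T. L t *\<^sub>R grad t xb yb)"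
    by (rule tendsto_diff[OF lim_\<gamma> lim_T])
  moreover have "\<forall>\<^sub>F m in sequentially.
      norm (\<gamma> (sb m) - (\<Sum>t\<in>T. \<mu> (sb m) t *\<^sub>R grad t (xs (sb m)) yb)) \<le> 2 * \<rho> (sb m)"
    using good_sb by (rule eventually_mono) (rule \<mu>(1))
  then have "(\<lambda>m. \<gamma> (sb m) - (\<Sum>t\<in>T. \<mu> (sb m) t *\<^sub>R grad t (xs (sb m)) yb)) \<longlonglongrightarrow> 0"
    by (rule Lim_null_comparison[OF _ \<rho>_sb])
  ultimately have L_sum: "(\<Sum>i\<in>{0..l}. L i *\<^sub>R grad i xb yb) - (\<Sum>t\<in>T. L t *\<^sub>R grad t xb yb) = 0"
    by (rule LIMSEQ_unique)
  have L_nonneg: "L i \<ge> 0" if "i \<in> {0..l}" for i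
    by (rule tendsto_lowerbound[OF u_lim[OF that]]) (simp_all add: u_nonneg)
  have "(\<lambda>m. \<Sum>i\<in>{0..l}. (u (sb m) i)\<^sup>2) \<longlonglongrightarrow> (\<Sum>i\<in>{0..l}. (L i)\<^sup>2)"
    using u_lim by (intro tendsto_sum tendsto_power) auto
  moreover have "\<forall>\<^sub>F m in sequentially. (\<Sum>i\<in>{0..l}. (u (sb m) i)\<^sup>2) = 1"
    using good_sb by (rule eventually_mono) (simp add: good_def sum_u_sq)
  then have "(\<lambda>m. \<Sum>i\<in>{0..l}. (u (sb m) i)\<^sup>2) \<longlonglongrightarrow> 1"
    by (rule tendsto_eventually)
  ultimately have L_sq: "(\<Sum>i\<in>{0..l}. (L i)\<^sup>2) = 1"
    by (rule LIMSEQ_unique)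
  define V where "V = {i\<in>{0..l}. L i > 0}"
  have "V \<subseteq> {0..l}"
    unfolding V_def by blast
  moreover have "\<forall>i\<in>V. \<forall>\<^sub>F m in sequentially. u (sb m) i > 0"
    unfolding V_def using u_lim order_tendstoD(1) by blast
  moreover have "pos_lin_dep (\<lambda>i. grad i xb yb) V (\<lambda>i. grad i xb yb) T"
  proof (rule pos_lin_depI[of V L T "\<lambda>t. - L t"])
    show "\<forall>i\<in>V. 0 \<le> L i"
      unfolding V_def by auto
    have "\<exists>i\<in>{0..l}. L i \<noteq> 0"
      using L_sq by (metis (mono_tags, lifting) power_zero_numeral sum.neutral zero_neq_one)
    then show "(\<exists>i\<in>V. L i \<noteq> 0) \<or> (\<exists>i\<in>T. - L i \<noteq> 0)"
      using L_nonneg unfolding V_def by force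
    have "(\<Sum>i\<in>V. L i *\<^sub>R grad i xb yb) = (\<Sum>i\<in>{0..l}. L i *\<^sub>R grad i xb yb)"
      using L_nonneg unfolding V_def by (intro sum.mono_neutral_left) force+
    then show "(\<Sum>i\<in>V. L i *\<^sub>R grad i xb yb) + (\<Sum>i\<in>T. (- L i) *\<^sub>R grad i xb yb) = 0"
      using L_sum by (simp add: sum_negf)
  qed
  ultimately show thesis
    using sb that by blast
qed

lemma active_if_eventually_violated:
  assumes sb: "strict_mono sb" and i: "i \<in> {1..l}" and pos: "\<forall>\<^sub>F m in sequentially. u (sb m) i > 0"
  shows "h i xb yb = 0"
proof -
  have "(\<lambda>m. h i (xs (sb m)) (z (sb m))) \<longlonglongrightarrow> h i xb yb"
    using i l_le_p LIMSEQ_subseq_LIMSEQ[OF xs_lim sb] LIMSEQ_subseq_LIMSEQ[OF z_tendsto sb]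
    by (intro h_tendsto) (auto simp: o_def)
  moreover have "\<forall>\<^sub>F m in sequentially. 0 \<le> h i (xs (sb m)) (z (sb m))"
  proof (rule eventually_mono[OF pos])
    fix m assume "u (sb m) i > 0"
    then have "resid (f (xs (sb m)) (ws (sb m))) (xs (sb m)) i (z (sb m)) > 0"
      by (rule resid_pos_if_u_pos)
    then show "0 \<le> h i (xs (sb m)) (z (sb m))"
      using i by (simp add: resid_def)
  qed
  ultimately have "0 \<le> h i xb yb"
    by (rule tendsto_lowerbound) simp
  moreover have "h i xb yb \<le> 0"
    using yb_Gamma i unfolding Gamma_def by simp
  ultimately show ?thesis
    by simp
qed

theorem impossible: False
proof -
  obtain sb V where sb: "strict_mono sb" and V: "V \<subseteq> {0..l}"
    and V_pos: "\<forall>i\<in>V. \<forall>\<^sub>F m in sequentially. u (sb m) i > 0"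
    and V_dep: "pos_lin_dep (\<lambda>i. grad i xb yb) V (\<lambda>i. grad i xb yb) T"
    by (rule limiting_pos_lin_dep)
  have V_T: "V \<inter> T = {}"
    using V T_sub by (force simp: subset_iff)
  obtain K \<alpha> \<beta> where KV: "K \<subseteq> V" and K_ne: "K \<noteq> {}" and \<alpha>: "\<forall>i\<in>K. \<alpha> i > 0"
    and sum0: "(\<Sum>i\<in>K. \<alpha> i *\<^sub>R grad i xb yb) + (\<Sum>i\<in>T. \<beta> i *\<^sub>R grad i xb yb) = 0"
    and minimal: "\<forall>k\<in>K. \<not> fam_lin_dep (\<lambda>i. grad i xb yb) ((K - {k}) \<union> T)"
    using pos_lin_dep_minimal[OF finite_subset[OF V] finite_T V_T T_indep V_dep] by blast
  have "K \<subseteq> {0..l}"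
    using KV V by blast
  then have K: "finite K" "K \<subseteq> {0..l}"
    using finite_subset by auto
  have "K \<subseteq> {0} \<union> {i\<in>{1..l}. h i xb yb = 0}"
  proof
    fix i assume "i \<in> K"
    then have "i \<in> V" "i \<le> l"
      using KV K(2) by auto
    then show "i \<in> {0} \<union> {i\<in>{1..l}. h i xb yb = 0}"
      using V_pos active_if_eventually_violated[OF sb, of i] by (cases "i = 0") auto
  qed
  moreover have "pos_lin_dep (\<lambda>i. grad i xb yb) K (\<lambda>i. grad i xb yb) T"
    using \<alpha> K_ne sum0 by (intro pos_lin_depI[of K \<alpha> T \<beta>]) (auto intro: less_imp_le)
  ultimately have dep_U: "\<forall>(x, y) \<in> U \<inter> (dom_map (Gamma h l p) \<times> UNIV). fam_lin_dep (\<lambda>i. grad i x y) (K \<union> T)"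
    by (rule rcpld)
  have xs_sb: "(\<lambda>m. xs (sb m)) \<longlonglongrightarrow> xb" and z_sb: "(\<lambda>m. z (sb m)) \<longlonglongrightarrow> yb"
    using LIMSEQ_subseq_LIMSEQ[OF xs_lim sb] LIMSEQ_subseq_LIMSEQ[OF z_tendsto sb] by (simp_all add: o_def)
  have "\<forall>\<^sub>F m in sequentially. (xs (sb m), z (sb m)) \<in> U"
    using tendsto_Pair[OF xs_sb z_sb] U by (rule topological_tendstoD)
  then have ev_dep: "\<forall>\<^sub>F m in sequentially. fam_lin_dep (\<lambda>i. grad i (xs (sb m)) (z (sb m))) (K \<union> T)"
  proof (rule eventually_mono)
    fix m assume "(xs (sb m), z (sb m)) \<in> U"
    moreover have "xs (sb m) \<in> dom_map (Gamma h l p)"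
      using ws_Gamma unfolding dom_map_def by blast
    ultimately have "(xs (sb m), z (sb m)) \<in> U \<inter> (dom_map (Gamma h l p) \<times> UNIV)"
      by simp
    from bspec[OF dep_U this] show "fam_lin_dep (\<lambda>i. grad i (xs (sb m)) (z (sb m))) (K \<union> T)"
      by simp
  qed
  have lim: "\<forall>i\<in>K \<union> T. (\<lambda>m. grad i (xs (sb m)) (z (sb m))) \<longlonglongrightarrow> grad i xb yb"
  proof
    fix i assume "i \<in> K \<union> T"
    then have "i \<le> p"
      using K(2) T_sub l_le_p by auto
    then show "(\<lambda>m. grad i (xs (sb m)) (z (sb m))) \<longlonglongrightarrow> grad i xb yb"
      by (rule grad_tendsto[OF _ xs_sb z_sb])
  qed
  have "K \<inter> T = {}"
    using KV V_T by blast
  from frequently_positive_dependence[OF K(1) K_ne finite_T this \<alpha> sum0 minimal lim ev_dep]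
  have "\<exists>\<^sub>F m in sequentially. \<exists>c. (\<forall>i\<in>K. c i > 0) \<and>
      (\<Sum>i\<in>K \<union> T. c i *\<^sub>R grad i (xs (sb m)) (z (sb m))) = 0" .
  moreover have "\<forall>\<^sub>F m in sequentially. \<forall>i\<in>K. u (sb m) i > 0"
    using K(1) KV V_pos by (intro eventually_ball_finite) auto
  ultimately have "\<exists>m. (\<exists>c. (\<forall>i\<in>K. c i > 0) \<and>
      (\<Sum>i\<in>K \<union> T. c i *\<^sub>R grad i (xs (sb m)) (z (sb m))) = 0) \<and> (\<forall>i\<in>K. u (sb m) i > 0)"
    by (rule frequently_ex[OF frequently_eventually_frequently])
  then obtain m c where c: "\<forall>i\<in>K. c i > 0"
    and c_sum: "(\<Sum>i\<in>K \<union> T. c i *\<^sub>R grad i (xs (sb m)) (z (sb m))) = 0"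
    and u_pos: "\<forall>i\<in>K. u (sb m) i > 0"
    by blast
  have ws_ok: "\<forall>i\<in>K. resid (f (xs (sb m)) (ws (sb m))) (xs (sb m)) i (ws (sb m)) \<le> 0"
    using K(2) ws_Gamma[of "sb m"] unfolding Gamma_def resid_def by auto
  have z_violated: "\<forall>i\<in>K. resid (f (xs (sb m)) (ws (sb m))) (xs (sb m)) i (z (sb m)) > 0"
    using u_pos resid_pos_if_u_pos by blast
  have "(\<Sum>i\<in>K \<union> T. c i *\<^sub>R grad i (xs (sb m)) (z (sb m))) \<noteq> 0"
    by (rule positive_gradient_combination_ne_0[OF K(2) K_ne T_sub z_eq_feasible ws_eq_feasible
          ws_ok z_violated c])
  then show False
    using c_sum by contradiction
qed

end

lemma (in convex_parametric_program) no_escaping_sequence: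
  assumes "yb \<in> Sol f h l p xb" and "RCPLD_S f h l p (dom_map (Gamma h l p)) xb yb"
    and "\<delta> > 0" "xs \<longlonglongrightarrow> xb" "ws \<longlonglongrightarrow> wb" "\<And>n. ws n \<in> Sol f h l p (xs n)"
    and "\<And>n. Sol f h l p (xs n) \<inter> ball yb \<delta> = {}"
  shows False
proof -
  from assms(2) obtain U T where data: "open U \<and> (xb, yb) \<in> U \<and> T \<subseteq> {l+1..p} \<and>
      \<not> fam_lin_dep (\<lambda>i. G_y f h i xb yb) T \<and>
      span ((\<lambda>i. G_y f h i xb yb) ` T) = span ((\<lambda>i. G_y f h i xb yb) ` {l+1..p}) \<and>
      (\<exists>r. \<forall>(x, y) \<in> U \<inter> (dom_map (Gamma h l p) \<times> UNIV). dim ((\<lambda>i. G_y f h i x y) ` {l+1..p}) = r) \<and>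
      (\<forall>K. K \<subseteq> {0} \<union> {i\<in>{1..l}. h i xb yb = 0} \<longrightarrow>
        pos_lin_dep (\<lambda>i. G_y f h i xb yb) K (\<lambda>i. G_y f h i xb yb) T \<longrightarrow>
        (\<forall>(x, y) \<in> U \<inter> (dom_map (Gamma h l p) \<times> UNIV). fam_lin_dep (\<lambda>i. G_y f h i x y) (K \<union> T)))"
    unfolding RCPLD_S_def by (elim exE) (rule that)
  have "lsc_failure f h l p xb yb xs ws wb \<delta> U T"
  proof (intro lsc_failure.intro convex_parametric_program_axioms lsc_failure_axioms.intro)
    show "\<And>K. K \<subseteq> {0} \<union> {i\<in>{1..l}. h i xb yb = 0} \<Longrightarrow>
      pos_lin_dep (\<lambda>i. G_y f h i xb yb) K (\<lambda>i. G_y f h i xb yb) T \<Longrightarrow>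
      \<forall>(x, y) \<in> U \<inter> (dom_map (Gamma h l p) \<times> UNIV). fam_lin_dep (\<lambda>i. G_y f h i x y) (K \<union> T)"
      using data by blast
  qed (use assms data in auto)
  then show False
    by (rule lsc_failure.impossible)
qed

theorem corollary4p15:
  fixes f :: "'a::euclidean_space \<Rightarrow> 'b::euclidean_space \<Rightarrow> real"
    and h :: "nat \<Rightarrow> 'a \<Rightarrow> 'b \<Rightarrow> real"
    and l p :: nat and xb :: 'a
  assumes lp: "l \<le> p"
    and C1f: "C1_fun (\<lambda>z. f (fst z) (snd z))"
    and C1h: "\<forall>i\<in>{1..p}. C1_fun (\<lambda>z. h i (fst z) (snd z))"
    and xb_dom: "xb \<in> dom_map (Gamma h l p)"
    and A1f: "\<forall>x. convex_on UNIV (f x)"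
    and A1I: "\<forall>x. \<forall>i\<in>{1..l}. convex_on UNIV (h i x)"
    and A1J: "\<forall>x. \<forall>i\<in>{l+1..p}. \<exists>a b. \<forall>y. h i x y = a \<bullet> y + b"
    and A2: "locally_bounded_at (Gamma h l p) xb"
    and RC: "\<forall>yb\<in>Sol f h l p xb. RCPLD_S f h l p (dom_map (Gamma h l p)) xb yb"
  shows "lsc_wrt (Sol f h l p) xb (dom_map (Sol f h l p))"
proof -
  interpret convex_parametric_program f h l p
    using lp C1f C1h A1f A1I A1J by unfold_locales
  have "locally_bounded_at (Sol f h l p) xb"
    using A2 by (rule locally_bounded_at_subset[rotated]) (auto simp: Sol_def)
  then show ?thesis
  proof (rule lsc_wrt_if_no_escaping_sequence)
    fix yb \<delta> xs ws wb
    assume yb: "yb \<in> Sol f h l p xb" and escape: "\<delta> > 0" "xs \<longlonglongrightarrow> xb" "ws \<longlonglongrightarrow> wb"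
      "\<And>n. ws n \<in> Sol f h l p (xs n)" "\<And>n. Sol f h l p (xs n) \<inter> ball yb \<delta> = {}"
    show False
      by (rule no_escaping_sequence[OF yb bspec[OF RC yb] escape])
  qed
qed

end
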